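(* For each $N\ge2$ let $(\nu_t^{(1:N)})_{t\ge1}$ be random vectors of non-negative integers with $\sum_i\nu_t^{(i)} = N$, such that for all sufficiently large $N$ and all $u\ge0$, $\tau_N(u)<\infty$ almost surely. Suppose there is a deterministic sequence $b_N\to0$ such that for all sufficiently large $N$, almost surely and uniformly in $t\ge1$, $$\frac{1}{(N)_3}\sum_{i=1}^N \mathbb{E}\big[(\nu_t^{(i)})_3 \,\big|\, \mathcal{F}_{t-1}\big] \leq b_N \frac{1}{(N)_2}\sum_{i=1}^N \mathbb{E}\big[(\nu_t^{(i)})_2 \,\big|\, \mathcal{F}_{t-1}\big].$$ Fix $k\in\mathbb{N}$, set $i_0:=0$, $i_k:=k$, and let $(E_N)$ be a sequence of events with $\lim_{N\to\infty}\mathbb{P}[E_N]=1$. Then for any times $0=t_0\le t_1\le\cdots\le t_k\le t$, $$\lim_{N\to\infty}\mathbb{E}\Bigg[\mathbb{1}_{E_N}\sum_{\substack{r_1<\cdots<r_k:\\ r_i\le\tau_N(t_i)\,\forall i}}\prod_{i=1}^k c_N(r_i)\Bigg] = \sum_{\substack{i_1\le\cdots\le i_{k-1}\in\{0,\dots,k\}:\\ i_j\ge j\ \forall j}}\prod_{j=1}^k\frac{(t_j-t_{j-1})^{i_j-i_{j-1}}}{(i_j-i_{j-1})!}.$$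
   Context: $(x)_k$ is the falling factorial; $\mathcal{F}_t := \sigma(\nu_s^{(1:N)}: s\le t)$ ($\mathcal{F}_0$ trivial). $c_N(r) := \frac{1}{(N)_2}\sum_i(\nu_r^{(i)})_2$; $\tau_N(u) := \inf\{s\in\{0,1,\dots\}: \sum_{r=1}^s c_N(r)\ge u\}$. The indices $r_i$ range over positive integers. *)

theory Defs
  imports "HOL-Probability.Probability"
begin

definition ffact_r :: "real \<Rightarrow> nat \<Rightarrow> real" where
  "ffact_r x k = (\<Prod>j<k. x - real j)"

text \<open>The offspring numbers: nu N t i \<omega> is nu_t^(i) in the N-th model (t \<ge> 1, 1 \<le> i \<le> N).
  Natural filtration F_t = sigma(nu_s^(1:N) : s \<le> t); F_0 is trivial.\<close>
definition filt :: "(nat \<Rightarrow> 'a measure) \<Rightarrow> (nat \<Rightarrow> nat \<Rightarrow> nat \<Rightarrow> 'a \<Rightarrow> nat) \<Rightarrow> nat \<Rightarrow> nat \<Rightarrow> 'a measure" where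
  "filt M nu N t = sigma (space (M N))
     {nu N s i -` A \<inter> space (M N) | s i A. 1 \<le> s \<and> s \<le> t \<and> 1 \<le> i \<and> i \<le> N}"

definition cN :: "(nat \<Rightarrow> nat \<Rightarrow> nat \<Rightarrow> 'a \<Rightarrow> nat) \<Rightarrow> nat \<Rightarrow> nat \<Rightarrow> 'a \<Rightarrow> real" where
  "cN nu N r \<omega> = (\<Sum>i=1..N. ffact_r (real (nu N r i \<omega>)) 2) / ffact_r (real N) 2"

definition tauN :: "(nat \<Rightarrow> nat \<Rightarrow> nat \<Rightarrow> 'a \<Rightarrow> nat) \<Rightarrow> nat \<Rightarrow> real \<Rightarrow> 'a \<Rightarrow> enat" where
  "tauN nu N u \<omega> =
     (if \<exists>s. (\<Sum>r=1..s. cN nu N r \<omega>) \<ge> u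
      then enat (LEAST s. (\<Sum>r=1..s. cN nu N r \<omega>) \<ge> u) else \<infinity>)"

definition rtuples :: "(nat \<Rightarrow> nat \<Rightarrow> nat \<Rightarrow> 'a \<Rightarrow> nat) \<Rightarrow> nat \<Rightarrow> nat \<Rightarrow> (nat \<Rightarrow> real) \<Rightarrow> 'a \<Rightarrow> (nat \<Rightarrow> nat) set" where
  "rtuples nu N k t \<omega> = {r. (\<forall>i. i \<notin> {1..k} \<longrightarrow> r i = 0)
      \<and> (\<forall>i\<in>{1..k}. 1 \<le> r i \<and> enat (r i) \<le> tauN nu N (t i) \<omega>)
      \<and> (\<forall>i\<in>{1..<k}. r i < r (i+1))}"

definition ext_idx :: "nat \<Rightarrow> (nat \<Rightarrow> nat) \<Rightarrow> nat \<Rightarrow> nat" where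
  "ext_idx k f j = (if j = 0 then 0 else if j = k then k else f j)"

definition ituples :: "nat \<Rightarrow> (nat \<Rightarrow> nat) set" where
  "ituples k = {f. (\<forall>j. j \<notin> {1..<k} \<longrightarrow> f j = 0)
      \<and> (\<forall>j\<in>{1..<k}. j \<le> f j \<and> f j \<le> k)
      \<and> (\<forall>j<k. ext_idx k f j \<le> ext_idx k f (Suc j))}"

end

theory Submission
  imports Defs
begin

text \<open>Write C(s) = c_N(1) + ... + c_N(s), so that T_j = \<tau>_N(t_j) is the first s with
  C(s) \<ge> t_j. Sorting the increasing tuples r by how many of their entries fall into each block
  (T_{j-1}, T_j] turns the sum over r into the sum, over the index tuples i of the limit, of
  products of elementary symmetric sums e_{i_j - i_{j-1}} of the c_N(r) over the blocks. As
  C(T_j) overshoots t_j by at most one increment, each block sums to t_j - t_{j-1} up to the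
  largest increment \<delta>, and e_m differs from (\<Sum>c)^m / m! by at most m \<delta> (\<Sum>c + 1)^m.
  So the sum over r is within K \<delta> of the limit, with K depending only on k and t_k, unless
  some increment c_N(r) with C(r-1) < t_k exceeds \<delta>.

  By Cauchy-Schwarz, c_N(r)^2 \<le> d_N(r) + c_N(r)/(N-1), where d_N(r) is the normalised sum of
  third factorial moments, and the moment hypothesis bounds d_N(r) by b_N c_N(r) after
  conditioning on F_{r-1}, which contains the event C(r-1) < t_k. With Markov's inequality and
  \<Sum>_r 1{C(r-1) < t_k} c_N(r) \<le> t_k + 1, this bounds the probability of a large increment by
  (|b_N| + 1/(N-1)) (t_k + 1) / \<delta>^2, which vanishes as N \<rightarrow> \<infinity>.\<close>

section \<open>Elementary symmetric sums\<close>

definition elem_sym :: "('a \<Rightarrow> real) \<Rightarrow> 'a set \<Rightarrow> nat \<Rightarrow> real" where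
  "elem_sym c B m = (\<Sum>A | A \<subseteq> B \<and> card A = m. \<Prod>a\<in>A. c a)"

lemma elem_sym_0 [simp]: "finite B \<Longrightarrow> elem_sym c B 0 = 1"
proof -
  assume "finite B"
  then have "{A. A \<subseteq> B \<and> card A = 0} = {{}}" by (auto dest: rev_finite_subset)
  then show ?thesis by (simp add: elem_sym_def)
qed

lemma elem_sym_nonneg: "(\<And>a. a \<in> B \<Longrightarrow> 0 \<le> c a) \<Longrightarrow> 0 \<le> elem_sym c B m"
  unfolding elem_sym_def by (intro sum_nonneg prod_nonneg) auto

text \<open>Double counting of the pairs (A, a) with a \<in> B - A, i.e. of the (m+1)-sets insert a A with a
  marked element.\<close>
lemma sum_mult_elem_sym:
  assumes fin: "finite B"
  shows "(\<Sum>a\<in>B. c a) * elem_sym c B m = real (Suc m) * elem_sym c B (Suc m)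
          + (\<Sum>A | A \<subseteq> B \<and> card A = m. (\<Prod>a\<in>A. c a) * (\<Sum>a\<in>A. c a))"
proof -
  let ?S = "\<lambda>m. {A. A \<subseteq> B \<and> card A = m}"
  have "(\<Sum>a\<in>B. c a) * elem_sym c B m = (\<Sum>A\<in>?S m. (\<Sum>a\<in>B. c a) * (\<Prod>a\<in>A. c a))"
    by (simp add: elem_sym_def sum_distrib_left)
  also have "\<dots> = (\<Sum>A\<in>?S m. (\<Prod>a\<in>A. c a) * (\<Sum>a\<in>A. c a) + (\<Sum>a\<in>B - A. c a * (\<Prod>a\<in>A. c a)))"
  proof (rule sum.cong[OF refl])
    fix A assume "A \<in> ?S m"
    then have "(\<Sum>a\<in>B. c a) = (\<Sum>a\<in>B - A. c a) + (\<Sum>a\<in>A. c a)"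
      using sum.subset_diff[of A B] fin by auto
    then show "(\<Sum>a\<in>B. c a) * (\<Prod>a\<in>A. c a)
        = (\<Prod>a\<in>A. c a) * (\<Sum>a\<in>A. c a) + (\<Sum>a\<in>B - A. c a * (\<Prod>a\<in>A. c a))"
      by (simp add: sum_distrib_right[symmetric] algebra_simps)
  qed
  also have "\<dots> = (\<Sum>A\<in>?S m. (\<Prod>a\<in>A. c a) * (\<Sum>a\<in>A. c a))
      + (\<Sum>(A, a)\<in>Sigma (?S m) (\<lambda>A. B - A). \<Prod>x\<in>insert a A. c x)"
    using fin by (simp add: sum.distrib sum.Sigma rev_finite_subset) (auto intro!: sum.cong dest: rev_finite_subset)
  also have "(\<Sum>(A, a)\<in>Sigma (?S m) (\<lambda>A. B - A). \<Prod>x\<in>insert a A. c x)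
      = (\<Sum>(A, a)\<in>Sigma (?S (Suc m)) (\<lambda>A. A). \<Prod>x\<in>A. c x)"
    by (rule sum.reindex_bij_witness[where i = "\<lambda>(A, a). (A - {a}, a)" and j = "\<lambda>(A, a). (insert a A, a)"])
       (use fin in \<open>auto simp: card_Diff_singleton dest: rev_finite_subset\<close>)
  also have "\<dots> = (\<Sum>A\<in>?S (Suc m). \<Sum>a\<in>A. \<Prod>x\<in>A. c x)"
    by (rule sum.Sigma[symmetric]) (use fin in \<open>auto dest: rev_finite_subset\<close>)
  also have "\<dots> = real (Suc m) * elem_sym c B (Suc m)"
    unfolding elem_sym_def sum_distrib_left by (rule sum.cong) auto
  finally show ?thesis by simp
qed

lemma elem_sym_Suc_bounds:
  assumes fin: "finite B" and c_nonneg: "\<And>a. a \<in> B \<Longrightarrow> 0 \<le> c a" and c_le: "\<And>a. a \<in> B \<Longrightarrow> c a \<le> \<delta>"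
  shows "0 \<le> (\<Sum>a\<in>B. c a) * elem_sym c B m - real (Suc m) * elem_sym c B (Suc m)"
    and "(\<Sum>a\<in>B. c a) * elem_sym c B m - real (Suc m) * elem_sym c B (Suc m) \<le> real m * \<delta> * elem_sym c B m"
proof -
  define R where "R = (\<Sum>A | A \<subseteq> B \<and> card A = m. (\<Prod>a\<in>A. c a) * (\<Sum>a\<in>A. c a))"
  have R_eq: "(\<Sum>a\<in>B. c a) * elem_sym c B m - real (Suc m) * elem_sym c B (Suc m) = R"
    unfolding R_def using sum_mult_elem_sym[OF fin] by simp
  show "0 \<le> (\<Sum>a\<in>B. c a) * elem_sym c B m - real (Suc m) * elem_sym c B (Suc m)"
    unfolding R_eq R_def using c_nonneg by (intro sum_nonneg mult_nonneg_nonneg prod_nonneg) auto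
  have "R \<le> (\<Sum>A | A \<subseteq> B \<and> card A = m. (\<Prod>a\<in>A. c a) * (real m * \<delta>))"
    unfolding R_def
  proof (rule sum_mono)
    fix A assume A: "A \<in> {A. A \<subseteq> B \<and> card A = m}"
    have "(\<Sum>a\<in>A. c a) \<le> real m * \<delta>" using A c_le sum_bounded_above[of A c \<delta>] by auto
    then show "(\<Prod>a\<in>A. c a) * (\<Sum>a\<in>A. c a) \<le> (\<Prod>a\<in>A. c a) * (real m * \<delta>)"
      using A c_nonneg by (intro mult_left_mono prod_nonneg) auto
  qed
  then have "R \<le> real m * \<delta> * elem_sym c B m"
    unfolding elem_sym_def by (simp add: sum_distrib_left mult.commute)
  then show "(\<Sum>a\<in>B. c a) * elem_sym c B m - real (Suc m) * elem_sym c B (Suc m) \<le> real m * \<delta> * elem_sym c B m"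
    unfolding R_eq .
qed

lemma elem_sym_approx:
  assumes fin: "finite B" and c_nonneg: "\<And>a. a \<in> B \<Longrightarrow> 0 \<le> c a"
    and c_le: "\<And>a. a \<in> B \<Longrightarrow> c a \<le> \<delta>" and "0 \<le> \<delta>"
  shows "0 \<le> (\<Sum>a\<in>B. c a) ^ m / fact m - elem_sym c B m \<and>
         (\<Sum>a\<in>B. c a) ^ m / fact m - elem_sym c B m \<le> real m * \<delta> * ((\<Sum>a\<in>B. c a) + 1) ^ m"
proof (induction m)
  case 0
  then show ?case using fin by simp
next
  case (Suc m)
  define p where "p = (\<Sum>a\<in>B. c a)"
  define e where "e = elem_sym c B m"
  define R where "R = p * e - real (Suc m) * elem_sym c B (Suc m)"
  define d where "d = p ^ m / fact m - e"
  have p_nonneg: "0 \<le> p" unfolding p_def using c_nonneg by (simp add: sum_nonneg)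
  have e_nonneg: "0 \<le> e" unfolding e_def using c_nonneg by (rule elem_sym_nonneg)
  have R: "0 \<le> R" "R \<le> real m * \<delta> * e"
    unfolding R_def p_def e_def using elem_sym_Suc_bounds[OF fin c_nonneg c_le] by auto
  have d: "0 \<le> d" "d \<le> real m * \<delta> * (p + 1) ^ m"
    using Suc.IH unfolding d_def p_def e_def by auto
  have "e \<le> p ^ m / fact m" using d(1) unfolding d_def by simp
  also have "\<dots> \<le> p ^ m" using p_nonneg by (simp add: divide_le_eq mult_le_cancel_left1)
  also have "\<dots> \<le> (p + 1) ^ m" using p_nonneg by (intro power_mono) auto
  finally have e_le: "e \<le> (p + 1) ^ m" .
  have "p ^ Suc m / fact (Suc m) = p * (p ^ m / fact m) / real (Suc m)"
    by (simp add: field_simps)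
  moreover have "elem_sym c B (Suc m) = (p * e - R) / real (Suc m)"
    unfolding R_def by simp
  ultimately have step: "p ^ Suc m / fact (Suc m) - elem_sym c B (Suc m) = (p * d + R) / real (Suc m)"
    unfolding d_def by (simp only: add_divide_distrib diff_divide_distrib right_diff_distrib)
  have "(p * d + R) / real (Suc m) \<le> p * d + R"
    using mult_nonneg_nonneg[OF p_nonneg d(1)] R(1) by (simp add: divide_le_eq mult_le_cancel_left1)
  also have "\<dots> \<le> p * (real m * \<delta> * (p + 1) ^ m) + real m * \<delta> * (p + 1) ^ m"
    using R e_le e_nonneg d p_nonneg \<open>0 \<le> \<delta>\<close> by (intro add_mono mult_left_mono order.trans[OF R(2)]) auto
  also have "\<dots> \<le> real (Suc m) * \<delta> * (p + 1) ^ Suc m"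
    using p_nonneg \<open>0 \<le> \<delta>\<close> by (simp add: algebra_simps)
  finally show ?case
    using step p_nonneg d R unfolding p_def by simp
qed

lemma UN_Int_disjoint_family:
  assumes disj: "disjoint_family_on B J" and sub: "\<And>j. j \<in> J \<Longrightarrow> h j \<subseteq> B j" and "j \<in> J"
  shows "(\<Union>j'\<in>J. h j') \<inter> B j = h j"
proof
  show "(\<Union>j'\<in>J. h j') \<inter> B j \<subseteq> h j"
  proof
    fix x assume "x \<in> (\<Union>j'\<in>J. h j') \<inter> B j"
    then obtain j' where "j' \<in> J" "x \<in> h j'" "x \<in> B j" by blast
    with sub \<open>j \<in> J\<close> disj show "x \<in> h j"
      unfolding disjoint_family_on_def by (cases "j' = j") blast+
  qed
qed (use sub \<open>j \<in> J\<close> in blast)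

lemma bij_betw_UN_disjoint_family:
  assumes disj: "disjoint_family_on B J"
  shows "bij_betw (\<lambda>h. \<Union>j\<in>J. h j) (PiE J (\<lambda>j. {C. C \<subseteq> B j \<and> P j C}))
    {A. A \<subseteq> (\<Union>j\<in>J. B j) \<and> (\<forall>j\<in>J. P j (A \<inter> B j))}"
proof (rule bij_betw_byWitness[where f' = "\<lambda>A. restrict (\<lambda>j. A \<inter> B j) J"])
  let ?S = "\<lambda>j. {C. C \<subseteq> B j \<and> P j C}"
  have sub: "h j \<subseteq> B j" if "h \<in> PiE J ?S" "j \<in> J" for h j using that by auto
  have UN_Int: "(\<Union>j'\<in>J. h j') \<inter> B j = h j" if "h \<in> PiE J ?S" "j \<in> J" for h j
    by (rule UN_Int_disjoint_family[OF disj sub[OF that(1)] that(2)])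
  show "\<forall>h\<in>PiE J ?S. restrict (\<lambda>j. (\<Union>j'\<in>J. h j') \<inter> B j) J = h"
  proof
    fix h assume h: "h \<in> PiE J ?S"
    show "restrict (\<lambda>j. (\<Union>j'\<in>J. h j') \<inter> B j) J = h"
      by (rule ext) (use h UN_Int[OF h] in \<open>auto simp: PiE_def extensional_def\<close>)
  qed
  show "(\<lambda>h. \<Union>j\<in>J. h j) ` PiE J ?S \<subseteq> {A. A \<subseteq> (\<Union>j\<in>J. B j) \<and> (\<forall>j\<in>J. P j (A \<inter> B j))}"
  proof safe
    fix h j assume "h \<in> PiE J ?S" "j \<in> J"
    then show "P j ((\<Union>j'\<in>J. h j') \<inter> B j)" using UN_Int by auto
  qed (use sub in blast)
qed auto

lemma prod_elem_sym_disjoint_family: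
  assumes fin: "finite J" and disj: "disjoint_family_on B J" and fin_B: "\<And>j. j \<in> J \<Longrightarrow> finite (B j)"
  shows "(\<Prod>j\<in>J. elem_sym c (B j) (m j))
       = (\<Sum>A | A \<subseteq> (\<Union>j\<in>J. B j) \<and> (\<forall>j\<in>J. card (A \<inter> B j) = m j). \<Prod>a\<in>A. c a)"
proof -
  define S where "S j = {C. C \<subseteq> B j \<and> card C = m j}" for j
  have fin_S: "finite (S j)" if "j \<in> J" for j using fin_B[OF that] unfolding S_def by auto
  have sub: "h j \<subseteq> B j" if "h \<in> PiE J S" "j \<in> J" for h j using that unfolding S_def by auto
  have "(\<Prod>j\<in>J. elem_sym c (B j) (m j)) = (\<Sum>h\<in>PiE J S. \<Prod>j\<in>J. \<Prod>a\<in>h j. c a)"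
    unfolding elem_sym_def S_def[symmetric] using fin fin_S by (rule prod_sum_PiE)
  also have "\<dots> = (\<Sum>h\<in>PiE J S. \<Prod>a\<in>(\<Union>j\<in>J. h j). c a)"
  proof (rule sum.cong[OF refl], rule prod.UNION_disjoint[symmetric])
    fix h assume h: "h \<in> PiE J S"
    show "\<forall>j\<in>J. finite (h j)" using sub[OF h] fin_B by (auto dest: finite_subset)
    show "\<forall>i\<in>J. \<forall>j\<in>J. i \<noteq> j \<longrightarrow> h i \<inter> h j = {}"
      using sub[OF h] disj unfolding disjoint_family_on_def by blast
  qed (rule fin)
  also have "\<dots> = (\<Sum>A | A \<subseteq> (\<Union>j\<in>J. B j) \<and> (\<forall>j\<in>J. card (A \<inter> B j) = m j). \<Prod>a\<in>A. c a)"
    unfolding S_def by (rule sum.reindex_bij_betw[OF bij_betw_UN_disjoint_family[OF disj]])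
  finally show ?thesis .
qed

lemma abs_prod_diff_le:
  fixes x y :: "'i \<Rightarrow> real"
  assumes L: "1 \<le> L" and x: "\<And>j. j \<in> J \<Longrightarrow> \<bar>x j\<bar> \<le> L" and y: "\<And>j. j \<in> J \<Longrightarrow> \<bar>y j\<bar> \<le> L"
  shows "\<bar>(\<Prod>j\<in>J. x j) - (\<Prod>j\<in>J. y j)\<bar> \<le> L ^ card J * (\<Sum>j\<in>J. \<bar>x j - y j\<bar>)"
proof -
  have scale: "(\<Prod>j\<in>J. z j) = L ^ card J * (\<Prod>j\<in>J. z j / L)" for z :: "'i \<Rightarrow> real"
    using L by (cases "finite J") (simp_all add: prod_dividef power_divide)
  have "\<bar>(\<Prod>j\<in>J. x j / L) - (\<Prod>j\<in>J. y j / L)\<bar> \<le> (\<Sum>j\<in>J. \<bar>x j / L - y j / L\<bar>)"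
    using norm_prod_diff[of J "\<lambda>j. x j / L" "\<lambda>j. y j / L"] x y L by simp
  also have "\<dots> \<le> (\<Sum>j\<in>J. \<bar>x j - y j\<bar>)"
    using L by (intro sum_mono) (simp add: diff_divide_distrib[symmetric] divide_le_eq mult_le_cancel_left1)
  finally show ?thesis
    using L by (subst (1 2) scale) (simp add: right_diff_distrib[symmetric] abs_mult mult_left_mono)
qed

lemma abs_power_diff_le:
  fixes a b L :: real
  assumes "1 \<le> L" "\<bar>a\<bar> \<le> L" "\<bar>b\<bar> \<le> L"
  shows "\<bar>a ^ m - b ^ m\<bar> \<le> L ^ m * real m * \<bar>a - b\<bar>"
  using abs_prod_diff_le[of L "{..<m}" "\<lambda>_. a" "\<lambda>_. b"] assms by simp

lemma elem_sym_block_approx: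
  fixes c :: "'a \<Rightarrow> real"
  assumes fin: "finite B" and c_nonneg: "\<And>a. a \<in> B \<Longrightarrow> 0 \<le> c a" and c_le: "\<And>a. a \<in> B \<Longrightarrow> c a \<le> \<delta>"
    and \<delta>: "0 \<le> \<delta>" "\<delta> \<le> 1" and close: "\<bar>(\<Sum>a\<in>B. c a) - D\<bar> \<le> \<delta>"
    and D: "0 \<le> D" "D + 2 \<le> L" and "m \<le> k"
  shows "\<bar>elem_sym c B m\<bar> \<le> L ^ k" "\<bar>D ^ m / fact m\<bar> \<le> L ^ k"
    and "\<bar>elem_sym c B m - D ^ m / fact m\<bar> \<le> 2 * real k * L ^ k * \<delta>"
proof -
  define p where "p = (\<Sum>a\<in>B. c a)"
  have p: "0 \<le> p" "p + 1 \<le> L" using c_nonneg close D \<delta> unfolding p_def by (auto simp: sum_nonneg)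
  have L: "1 \<le> L" using D by simp
  have pow_le: "x ^ m \<le> L ^ k" if "0 \<le> x" "x \<le> L" for x
    using power_mono[OF that(2,1), of m] power_increasing[OF \<open>m \<le> k\<close> L] by linarith
  have div_fact_le: "x / fact m \<le> x" if "0 \<le> x" for x :: real
    using that by (simp add: divide_le_eq mult_le_cancel_left1)
  have approx: "0 \<le> p ^ m / fact m - elem_sym c B m" "p ^ m / fact m - elem_sym c B m \<le> real m * \<delta> * (p + 1) ^ m"
    using elem_sym_approx[OF fin c_nonneg c_le \<delta>(1)] unfolding p_def by auto
  have e_nonneg: "0 \<le> elem_sym c B m" using c_nonneg by (rule elem_sym_nonneg)
  show "\<bar>elem_sym c B m\<bar> \<le> L ^ k"
    using approx(1) e_nonneg div_fact_le[of "p ^ m"] pow_le[of p] p by simp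
  show "\<bar>D ^ m / fact m\<bar> \<le> L ^ k"
    using div_fact_le[of "D ^ m"] pow_le[of D] D by simp
  have "real m * \<delta> * (p + 1) ^ m \<le> real k * \<delta> * L ^ k"
    using pow_le[of "p + 1"] p \<delta> \<open>m \<le> k\<close> by (intro mult_mono) auto
  then have e_close: "\<bar>elem_sym c B m - p ^ m / fact m\<bar> \<le> real k * L ^ k * \<delta>"
    using approx by (simp add: algebra_simps)
  have "\<bar>p ^ m / fact m - D ^ m / fact m\<bar> \<le> \<bar>p ^ m - D ^ m\<bar>"
    using div_fact_le[of "\<bar>p ^ m - D ^ m\<bar>"] by (simp add: diff_divide_distrib[symmetric])
  also have "\<dots> \<le> L ^ m * real m * \<bar>p - D\<bar>"
    using p D by (intro abs_power_diff_le) auto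
  also have "\<dots> \<le> L ^ k * real k * \<delta>"
    using power_increasing[OF \<open>m \<le> k\<close> L] \<open>m \<le> k\<close> close L unfolding p_def by (intro mult_mono) auto
  finally show "\<bar>elem_sym c B m - D ^ m / fact m\<bar> \<le> 2 * real k * L ^ k * \<delta>"
    using e_close by (simp add: algebra_simps)
qed

section \<open>Increasing tuples and their block counts\<close>

definition incr_tuples :: "nat \<Rightarrow> (nat \<Rightarrow> nat) \<Rightarrow> (nat \<Rightarrow> nat) set" where
  "incr_tuples k T = {r. (\<forall>i. i \<notin> {1..k} \<longrightarrow> r i = 0) \<and> (\<forall>i\<in>{1..k}. 1 \<le> r i \<and> r i \<le> T i)
      \<and> (\<forall>i\<in>{1..<k}. r i < r (i+1))}"

definition staircase_sets :: "nat \<Rightarrow> (nat \<Rightarrow> nat) \<Rightarrow> nat set set" where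
  "staircase_sets k T = {A. A \<subseteq> {1..T k} \<and> card A = k \<and> (\<forall>j\<in>{1..k}. j \<le> card (A \<inter> {..T j}))}"

lemma incr_tuple_less:
  fixes r :: "nat \<Rightarrow> nat"
  assumes "\<forall>i\<in>{1..<k}. r i < r (i+1)" "i \<in> {1..k}" "i' \<in> {1..k}" "i < i'"
  shows "r i < r i'"
  using lift_Suc_mono_less_ivl[of "{1..<k}" r i i'] assms by auto

lemma incr_tuple_le:
  fixes r :: "nat \<Rightarrow> nat"
  assumes "\<forall>i\<in>{1..<k}. r i < r (i+1)" "i \<in> {1..k}" "i' \<in> {1..k}" "i \<le> i'"
  shows "r i \<le> r i'"
  using incr_tuple_less[OF assms(1-3)] assms(4) by (cases "i = i'") auto

lemma inj_on_incr_tuple: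
  fixes r :: "nat \<Rightarrow> nat"
  assumes "\<forall>i\<in>{1..<k}. r i < r (i+1)"
  shows "inj_on r {1..k}"
  by (rule inj_onI) (metis assms incr_tuple_less linorder_neqE_nat less_irrefl)

lemma incr_tuple_le_iff_card:
  fixes r :: "nat \<Rightarrow> nat"
  assumes incr: "\<forall>i\<in>{1..<k}. r i < r (i+1)" and j: "j \<in> {1..k}"
  shows "j \<le> card (r ` {1..k} \<inter> {..x}) \<longleftrightarrow> r j \<le> x"
proof -
  let ?I = "{i\<in>{1..k}. r i \<le> x}"
  have "r ` {1..k} \<inter> {..x} = r ` ?I" by auto
  moreover have "inj_on r ?I" using inj_on_incr_tuple[OF incr] by (rule inj_on_subset) auto
  ultimately have card_eq: "card (r ` {1..k} \<inter> {..x}) = card ?I" by (simp add: card_image)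
  show ?thesis
  proof
    assume "j \<le> card (r ` {1..k} \<inter> {..x})"
    moreover have "?I \<subseteq> {1..<j}" if "x < r j"
    proof
      fix i assume "i \<in> ?I"
      then show "i \<in> {1..<j}" using that incr_tuple_le[OF incr j, of i] by (cases "j \<le> i") auto
    qed
    ultimately show "r j \<le> x"
      using card_mono[of "{1..<j}" ?I] card_eq j by (fastforce simp: not_le)
  next
    assume "r j \<le> x"
    then have "{1..j} \<subseteq> ?I" using j incr_tuple_le[OF incr _ j] order.trans by fastforce
    then show "j \<le> card (r ` {1..k} \<inter> {..x})" using card_mono[of ?I "{1..j}"] card_eq by simp
  qed
qed

lemma inj_on_incr_tuples_image: "inj_on (\<lambda>r. r ` {1..k}) (incr_tuples k T)"
proof (rule inj_onI)
  fix r r' assume r: "r \<in> incr_tuples k T" and r': "r' \<in> incr_tuples k T"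
    and eq: "r ` {1..k} = r' ` {1..k}"
  have incr: "\<forall>i\<in>{1..<k}. r i < r (i+1)" "\<forall>i\<in>{1..<k}. r' i < r' (i+1)"
    using r r' unfolding incr_tuples_def by auto
  show "r = r'"
  proof
    fix i show "r i = r' i"
    proof (cases "i \<in> {1..k}")
      case True
      have "r i \<le> x \<longleftrightarrow> r' i \<le> x" for x
        using incr_tuple_le_iff_card[OF incr(1) True] incr_tuple_le_iff_card[OF incr(2) True] eq by simp
      then show ?thesis using le_antisym by blast
    next
      case False
      then show ?thesis using r r' unfolding incr_tuples_def by auto
    qed
  qed
qed

lemma incr_tuples_image_in_staircase_sets:
  assumes r: "r \<in> incr_tuples k T"
  shows "r ` {1..k} \<in> staircase_sets k T"
proof -
  have incr: "\<forall>i\<in>{1..<k}. r i < r (i+1)" using r unfolding incr_tuples_def by auto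
  have "r ` {1..k} \<subseteq> {1..T k}"
  proof
    fix x assume "x \<in> r ` {1..k}"
    then obtain i where i: "i \<in> {1..k}" "x = r i" by auto
    then have "r i \<le> r k" by (intro incr_tuple_le[OF incr]) auto
    moreover have "1 \<le> r i" "r k \<le> T k" using r i unfolding incr_tuples_def by auto
    ultimately show "x \<in> {1..T k}" using i by auto
  qed
  moreover have "card (r ` {1..k}) = k" using inj_on_incr_tuple[OF incr] by (simp add: card_image)
  moreover have "\<forall>j\<in>{1..k}. j \<le> card (r ` {1..k} \<inter> {..T j})"
    using incr_tuple_le_iff_card[OF incr] r unfolding incr_tuples_def by auto
  ultimately show ?thesis unfolding staircase_sets_def by auto
qed

lemma staircase_set_eq_incr_tuples_image:
  assumes A: "A \<in> staircase_sets k T"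
  obtains r where "r \<in> incr_tuples k T" "r ` {1..k} = A"
proof -
  have fin: "finite A" using A unfolding staircase_sets_def by (auto dest: finite_subset)
  define xs where "xs = sorted_list_of_set A"
  have len: "length xs = k" using A unfolding xs_def staircase_sets_def by simp
  have sorted: "sorted_wrt (<) xs" unfolding xs_def by (rule strict_sorted_list_of_set)
  define r where "r i = (if i \<in> {1..k} then xs ! (i - 1) else 0)" for i
  have incr: "\<forall>i\<in>{1..<k}. r i < r (i+1)"
    unfolding r_def using sorted_wrt_nth_less[OF sorted] len by auto
  have "r ` {1..k} = (\<lambda>i. xs ! (i - 1)) ` Suc ` {0..<k}"
    unfolding r_def image_Suc_atLeastLessThan atLeastLessThanSuc_atLeastAtMost by simp
  also have "\<dots> = (!) xs ` {0..<k}" by (simp only: image_image diff_Suc_1)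
  also have "\<dots> = set xs" using len nth_image[of k xs] by simp
  finally have img: "r ` {1..k} = A" unfolding xs_def using fin by simp
  have "r \<in> incr_tuples k T"
    unfolding incr_tuples_def
  proof (intro CollectI conjI ballI allI impI)
    fix i assume i: "i \<in> {1..k}"
    then have "r i \<in> A" using img by auto
    then show "1 \<le> r i" using A unfolding staircase_sets_def by auto
    show "r i \<le> T i"
      using A i incr_tuple_le_iff_card[OF incr i, of "T i"] img unfolding staircase_sets_def by simp
  qed (use incr r_def in auto)
  then show ?thesis using img that by blast
qed

lemma bij_betw_incr_tuples_staircase_sets:
  "bij_betw (\<lambda>r. r ` {1..k}) (incr_tuples k T) (staircase_sets k T)"
  unfolding bij_betw_def
  using inj_on_incr_tuples_image incr_tuples_image_in_staircase_sets staircase_set_eq_incr_tuples_image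
  by blast

lemma sum_incr_tuples_eq_sum_staircase_sets:
  "(\<Sum>r\<in>incr_tuples k T. \<Prod>i=1..k. c (r i)) = (\<Sum>A\<in>staircase_sets k T. \<Prod>a\<in>A. (c a :: real))"
proof -
  have "(\<Sum>A\<in>staircase_sets k T. \<Prod>a\<in>A. c a) = (\<Sum>r\<in>incr_tuples k T. \<Prod>a\<in>r ` {1..k}. c a)"
    by (rule sum.reindex_bij_betw[OF bij_betw_incr_tuples_staircase_sets, symmetric])
  also have "\<dots> = (\<Sum>r\<in>incr_tuples k T. \<Prod>i=1..k. c (r i))"
    by (intro sum.cong refl prod.reindex[THEN trans] inj_on_incr_tuple) (auto simp: incr_tuples_def)
  finally show ?thesis by simp
qed

lemma mono_upto_le:
  fixes T :: "nat \<Rightarrow> 'a::order"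
  assumes "\<forall>j<k. T j \<le> T (Suc j)" "j \<le> j'" "j' \<le> k"
  shows "T j \<le> T j'"
  by (rule lift_Suc_mono_le_ivl[of "{..<k}"]) (use assms in auto)

definition block :: "(nat \<Rightarrow> nat) \<Rightarrow> nat \<Rightarrow> nat set" where
  "block T j = {T (j - 1)<..T j}"

definition ext_idx_gap :: "nat \<Rightarrow> (nat \<Rightarrow> nat) \<Rightarrow> nat \<Rightarrow> nat" where
  "ext_idx_gap k f j = ext_idx k f j - ext_idx k f (j - 1)"

text \<open>For a staircase set A, cum_counts k T A j is the index i_j of the limit formula:
  the number of elements of A up to T j.\<close>
definition cum_counts :: "nat \<Rightarrow> (nat \<Rightarrow> nat) \<Rightarrow> nat set \<Rightarrow> nat \<Rightarrow> nat" where
  "cum_counts k T A j = (if j \<in> {1..<k} then card (A \<inter> {..T j}) else 0)"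

lemma disjoint_family_on_block:
  assumes mono: "\<forall>j<k. T j \<le> T (Suc j)"
  shows "disjoint_family_on (block T) {1..k}"
  unfolding disjoint_family_on_def
proof (intro ballI impI)
  have "block T i \<inter> block T j = {}" if "i \<in> {1..k}" "j \<in> {1..k}" "i < j" for i j
  proof -
    have "T i \<le> T (j - 1)" using mono_upto_le[OF mono, of i "j - 1"] that by auto
    then show ?thesis unfolding block_def by auto
  qed
  then show "block T i \<inter> block T j = {}" if "i \<in> {1..k}" "j \<in> {1..k}" "i \<noteq> j" for i j
    using that by (metis Int_commute linorder_neqE_nat)
qed

lemma UN_block:
  assumes T0: "T 0 = 0" and mono: "\<forall>j<k. T j \<le> T (Suc j)" and "j \<le> k"
  shows "(\<Union>j'\<in>{1..j}. block T j') = {1..T j}"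
  using \<open>j \<le> k\<close>
proof (induction j)
  case 0
  then show ?case using T0 by simp
next
  case (Suc j)
  have "T j \<le> T (Suc j)" using mono Suc.prems by simp
  then have "{1..T (Suc j)} = {1..T j} \<union> block T (Suc j)" unfolding block_def by auto
  then show ?case using Suc by (simp add: atLeastAtMostSuc_conv Un_commute)
qed

lemma card_Int_atMost_eq_sum_block:
  assumes T0: "T 0 = 0" and mono: "\<forall>j<k. T j \<le> T (Suc j)"
    and A: "A \<subseteq> {1..T k}" and "j \<le> k"
  shows "card (A \<inter> {..T j}) = (\<Sum>j'=1..j. card (A \<inter> block T j'))"
proof -
  have finite_A: "finite A" using A by (rule finite_subset) simp
  have "disjoint_family_on (block T) {1..j}"
    using disjoint_family_on_mono[OF _ disjoint_family_on_block[OF mono]] \<open>j \<le> k\<close> by auto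
  then have disj: "disjoint_family_on (\<lambda>j'. A \<inter> block T j') {1..j}"
    unfolding disjoint_family_on_def by blast
  have "A \<inter> {..T j} = (\<Union>j'\<in>{1..j}. A \<inter> block T j')"
    using UN_block[OF T0 mono \<open>j \<le> k\<close>] A by auto
  also have "card \<dots> = (\<Sum>j'=1..j. card (A \<inter> block T j'))"
    by (rule card_UN_disjoint'[OF disj]) (use finite_A in auto)
  finally show ?thesis .
qed

lemma sum_ext_idx_gap:
  assumes f: "f \<in> ituples k" and "j \<le> k"
  shows "(\<Sum>j'=1..j. ext_idx_gap k f j') = ext_idx k f j"
  using \<open>j \<le> k\<close>
proof (induction j)
  case 0
  then show ?case by (simp add: ext_idx_def)
next
  case (Suc j)
  have "ext_idx k f j \<le> ext_idx k f (Suc j)" using f Suc.prems unfolding ituples_def by auto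
  then show ?case using Suc by (simp add: ext_idx_gap_def)
qed

lemma ext_idx_gap_le:
  assumes "f \<in> ituples k" shows "ext_idx_gap k f j \<le> k"
proof -
  have "ext_idx k f j \<le> k" using assms unfolding ituples_def ext_idx_def by auto
  then show ?thesis unfolding ext_idx_gap_def by simp
qed

lemma ext_idx_cum_counts:
  assumes T0: "T 0 = 0" and A: "A \<subseteq> {1..T k}" "card A = k" and "j \<le> k"
  shows "ext_idx k (cum_counts k T A) j = card (A \<inter> {..T j})"
proof -
  have "A \<inter> {..T 0} = {}" "A \<inter> {..T k} = A" using A T0 by auto
  then show ?thesis using A \<open>j \<le> k\<close> by (auto simp: ext_idx_def cum_counts_def)
qed

lemma finite_ituples: "finite (ituples k)"
proof (rule finite_subset)
  show "ituples k \<subseteq> (\<lambda>g j. if j \<in> {1..<k} then g j else 0) ` PiE {1..<k} (\<lambda>_. {0..k})"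
  proof
    fix f assume f: "f \<in> ituples k"
    then have "restrict f {1..<k} \<in> PiE {1..<k} (\<lambda>_. {0..k})"
      and "f = (\<lambda>j. if j \<in> {1..<k} then restrict f {1..<k} j else 0)"
      unfolding ituples_def by auto
    then show "f \<in> (\<lambda>g j. if j \<in> {1..<k} then g j else 0) ` PiE {1..<k} (\<lambda>_. {0..k})" by blast
  qed
qed (intro finite_imageI finite_PiE; simp)

lemma finite_staircase_sets: "finite (staircase_sets k T)"
  by (rule finite_subset[of _ "Pow {1..T k}"]) (auto simp: staircase_sets_def)

lemma cum_counts_in_ituples:
  assumes T0: "T 0 = 0" and mono: "\<forall>j<k. T j \<le> T (Suc j)" and A: "A \<in> staircase_sets k T"
  shows "cum_counts k T A \<in> ituples k"
proof -
  have sub: "A \<subseteq> {1..T k}" and card_A: "card A = k"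
    and lower: "\<forall>j\<in>{1..k}. j \<le> card (A \<inter> {..T j})"
    using A unfolding staircase_sets_def by auto
  have fin: "finite A" using sub by (rule finite_subset) simp
  have "card (A \<inter> {..T j}) \<le> k" for j using card_mono[OF fin, of "A \<inter> {..T j}"] card_A by auto
  moreover have "ext_idx k (cum_counts k T A) j \<le> ext_idx k (cum_counts k T A) (Suc j)" if "j < k" for j
  proof -
    have "card (A \<inter> {..T j}) \<le> card (A \<inter> {..T (Suc j)})"
      using mono that fin by (intro card_mono) auto
    then show ?thesis using ext_idx_cum_counts[OF T0 sub card_A] that by simp
  qed
  ultimately show ?thesis using lower unfolding ituples_def cum_counts_def by auto
qed

lemma staircase_sets_cum_counts_iff:
  assumes T0: "T 0 = 0" and mono: "\<forall>j<k. T j \<le> T (Suc j)" and f: "f \<in> ituples k"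
    and A: "A \<subseteq> {1..T k}"
  shows "A \<in> staircase_sets k T \<and> cum_counts k T A = f
     \<longleftrightarrow> (\<forall>j\<in>{1..k}. card (A \<inter> block T j) = ext_idx_gap k f j)"
proof
  assume "A \<in> staircase_sets k T \<and> cum_counts k T A = f"
  then have card_A: "card A = k" and counts: "cum_counts k T A = f" unfolding staircase_sets_def by auto
  show "\<forall>j\<in>{1..k}. card (A \<inter> block T j) = ext_idx_gap k f j"
  proof
    fix j assume "j \<in> {1..k}"
    then have j: "1 \<le> j" "j \<le> k" "j - 1 \<le> k" by auto
    have "card (A \<inter> {..T j}) = card (A \<inter> {..T (j - 1)}) + card (A \<inter> block T j)"
      using card_Int_atMost_eq_sum_block[OF T0 mono A j(2)] card_Int_atMost_eq_sum_block[OF T0 mono A j(3)] j(1)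
      by (cases j) (auto simp: sum.cl_ivl_Suc)
    then show "card (A \<inter> block T j) = ext_idx_gap k f j"
      using ext_idx_cum_counts[OF T0 A card_A j(2)] ext_idx_cum_counts[OF T0 A card_A j(3)]
      unfolding counts ext_idx_gap_def by simp
  qed
next
  assume gaps: "\<forall>j\<in>{1..k}. card (A \<inter> block T j) = ext_idx_gap k f j"
  have cum: "card (A \<inter> {..T j}) = ext_idx k f j" if "j \<le> k" for j
    using card_Int_atMost_eq_sum_block[OF T0 mono A that] sum_ext_idx_gap[OF f that] gaps that by simp
  have "A \<inter> {..T k} = A" using A by auto
  then have card_A: "card A = k" using cum[of k] by (simp add: ext_idx_def)
  have "j \<le> card (A \<inter> {..T j})" if "j \<in> {1..k}" for j
    using cum[of j] that f unfolding ituples_def ext_idx_def by (cases "j = k") auto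
  then have "A \<in> staircase_sets k T" using A card_A unfolding staircase_sets_def by auto
  moreover have "cum_counts k T A = f"
  proof
    fix j show "cum_counts k T A j = f j"
      using cum[of j] f unfolding cum_counts_def ituples_def ext_idx_def by auto
  qed
  ultimately show "A \<in> staircase_sets k T \<and> cum_counts k T A = f" by blast
qed

lemma sum_staircase_sets_eq_sum_ituples:
  assumes T0: "T 0 = 0" and mono: "\<forall>j<k. T j \<le> T (Suc j)"
  shows "(\<Sum>A\<in>staircase_sets k T. \<Prod>a\<in>A. c a)
       = (\<Sum>f\<in>ituples k. \<Prod>j=1..k. elem_sym c (block T j) (ext_idx_gap k f j))"
proof -
  have "(\<Sum>A\<in>staircase_sets k T. \<Prod>a\<in>A. c a)
      = (\<Sum>f\<in>ituples k. \<Sum>A | A \<in> staircase_sets k T \<and> cum_counts k T A = f. \<Prod>a\<in>A. c a)"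
    by (rule sum.group[symmetric]) (use finite_staircase_sets finite_ituples cum_counts_in_ituples[OF T0 mono] in auto)
  also have "\<dots> = (\<Sum>f\<in>ituples k. \<Prod>j=1..k. elem_sym c (block T j) (ext_idx_gap k f j))"
  proof (rule sum.cong[OF refl])
    fix f assume f: "f \<in> ituples k"
    have "{A. A \<in> staircase_sets k T \<and> cum_counts k T A = f}
        = {A. A \<subseteq> (\<Union>j\<in>{1..k}. block T j) \<and> (\<forall>j\<in>{1..k}. card (A \<inter> block T j) = ext_idx_gap k f j)}"
      unfolding UN_block[OF T0 mono order.refl]
    proof (rule Collect_cong)
      fix A show "A \<in> staircase_sets k T \<and> cum_counts k T A = f
          \<longleftrightarrow> A \<subseteq> {1..T k} \<and> (\<forall>j\<in>{1..k}. card (A \<inter> block T j) = ext_idx_gap k f j)"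
        using staircase_sets_cum_counts_iff[OF T0 mono f, of A] by (auto simp: staircase_sets_def)
    qed
    then show "(\<Sum>A | A \<in> staircase_sets k T \<and> cum_counts k T A = f. \<Prod>a\<in>A. c a)
        = (\<Prod>j=1..k. elem_sym c (block T j) (ext_idx_gap k f j))"
      using prod_elem_sym_disjoint_family[OF _ disjoint_family_on_block[OF mono]]
      by (simp add: block_def)
  qed
  finally show ?thesis .
qed

section \<open>Passage times of a nonnegative sequence\<close>

text \<open>The quantities tauN and rtuples, for an arbitrary sequence c in place of c_N(.)(\<omega>).\<close>
definition passage_time :: "(nat \<Rightarrow> real) \<Rightarrow> real \<Rightarrow> enat" where
  "passage_time c u = (if \<exists>s. u \<le> (\<Sum>r=1..s. c r) then enat (LEAST s. u \<le> (\<Sum>r=1..s. c r)) else \<infinity>)"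

definition passage_tuples :: "(nat \<Rightarrow> real) \<Rightarrow> nat \<Rightarrow> (nat \<Rightarrow> real) \<Rightarrow> (nat \<Rightarrow> nat) set" where
  "passage_tuples c k t = {r. (\<forall>i. i \<notin> {1..k} \<longrightarrow> r i = 0)
      \<and> (\<forall>i\<in>{1..k}. 1 \<le> r i \<and> enat (r i) \<le> passage_time c (t i))
      \<and> (\<forall>i\<in>{1..<k}. r i < r (i+1))}"

definition tuple_limit :: "nat \<Rightarrow> (nat \<Rightarrow> real) \<Rightarrow> real" where
  "tuple_limit k t = (\<Sum>f\<in>ituples k. \<Prod>j=1..k. (t j - t (j - 1)) ^ ext_idx_gap k f j / fact (ext_idx_gap k f j))"

text \<open>Its exact form is immaterial; it depends on k and t k only.\<close>
definition approx_const :: "nat \<Rightarrow> real \<Rightarrow> real" where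
  "approx_const k u = real (card (ituples k)) * ((u + 2) ^ k) ^ k * (real k * (2 * real k * (u + 2) ^ k))"

lemma approx_const_nonneg: "0 \<le> u \<Longrightarrow> 0 \<le> approx_const k u"
  unfolding approx_const_def by simp

lemma partial_sum_mono:
  fixes c :: "nat \<Rightarrow> real"
  assumes "\<And>r. 0 \<le> c r" "s \<le> s'"
  shows "(\<Sum>r=1..s. c r) \<le> (\<Sum>r=1..s'. c r)"
  using assms by (intro sum_mono2) auto

lemma sum_greaterThanAtMost_eq_diff:
  fixes c :: "nat \<Rightarrow> real"
  assumes "a \<le> b"
  shows "(\<Sum>r\<in>{a<..b}. c r) = (\<Sum>r=1..b. c r) - (\<Sum>r=1..a. c r)"
proof -
  have "{1..b} = {1..a} \<union> {a<..b}" "{1..a} \<inter> {a<..b} = {}" using assms by auto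
  then show ?thesis by (simp add: sum.union_disjoint)
qed

lemma enat_le_passage_time_iff:
  fixes c :: "nat \<Rightarrow> real"
  assumes c_nonneg: "\<And>r. 0 \<le> c r" and "1 \<le> r"
  shows "enat r \<le> passage_time c u \<longleftrightarrow> (\<Sum>s=1..r-1. c s) < u"
proof (cases "\<exists>s. u \<le> (\<Sum>r=1..s. c r)")
  case True
  define n where "n = (LEAST s. u \<le> (\<Sum>r=1..s. c r))"
  have "u \<le> (\<Sum>r=1..n. c r)" unfolding n_def using True by (rule LeastI_ex)
  moreover have "(\<Sum>s=1..r-1. c s) < u" if "r \<le> n"
  proof -
    have "r - 1 < n" using that \<open>1 \<le> r\<close> by simp
    then show ?thesis using not_less_Least[of "r - 1" "\<lambda>s. u \<le> (\<Sum>r=1..s. c r)"] unfolding n_def by simp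
  qed
  moreover have "r \<le> n" if "(\<Sum>s=1..r-1. c s) < u"
  proof (rule ccontr)
    assume "\<not> r \<le> n"
    then have "(\<Sum>r=1..n. c r) \<le> (\<Sum>s=1..r-1. c s)" by (intro partial_sum_mono[where c = c, OF c_nonneg]) simp
    then show False using that \<open>u \<le> (\<Sum>r=1..n. c r)\<close> by simp
  qed
  ultimately have "r \<le> n \<longleftrightarrow> (\<Sum>s=1..r-1. c s) < u" by blast
  then show ?thesis using True unfolding passage_time_def n_def by simp
next
  case False
  then have "(\<Sum>s=1..r-1. c s) < u" by (simp add: not_le)
  with False show ?thesis unfolding passage_time_def by simp
qed

lemma passage_indices:
  fixes c t :: "nat \<Rightarrow> real"
  assumes c_nonneg: "\<And>r. 0 \<le> c r" and t0: "t 0 = 0" and t_mono: "\<forall>j<k. t j \<le> t (Suc j)"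
    and passed: "\<exists>s. t k \<le> (\<Sum>r=1..s. c r)"
    and small: "\<forall>r\<ge>1. (\<Sum>s=1..r-1. c s) < t k \<longrightarrow> c r \<le> \<delta>" and "0 \<le> \<delta>"
  obtains T where "T 0 = 0" and "\<forall>j<k. T j \<le> T (Suc j)" and "passage_tuples c k t = incr_tuples k T"
    and "\<And>j. j \<le> k \<Longrightarrow> t j \<le> (\<Sum>r=1..T j. c r) \<and> (\<Sum>r=1..T j. c r) \<le> t j + \<delta>"
    and "\<And>r. r \<in> {1..T k} \<Longrightarrow> c r \<le> \<delta>"
proof
  define T where "T j = (LEAST s. t j \<le> (\<Sum>r=1..s. c r))" for j
  have passed_j: "\<exists>s. t j \<le> (\<Sum>r=1..s. c r)" if "j \<le> k" for j
    using passed mono_upto_le[OF t_mono that order.refl] order.trans by blast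
  have reached: "t j \<le> (\<Sum>r=1..T j. c r)" if "j \<le> k" for j
    unfolding T_def using passed_j[OF that] by (rule LeastI_ex)
  have before: "(\<Sum>r=1..s. c r) < t j" if "s < T j" for s j
    using not_less_Least[OF that[unfolded T_def]] by simp
  have enat_le_iff: "enat r \<le> passage_time c (t j) \<longleftrightarrow> r \<le> T j" if "j \<le> k" for r j
    using passed_j[OF that] unfolding passage_time_def T_def by simp
  show "T 0 = 0" unfolding T_def using t0 by simp
  show mono: "\<forall>j<k. T j \<le> T (Suc j)"
  proof (intro allI impI)
    fix j assume "j < k"
    then have "t j \<le> (\<Sum>r=1..T (Suc j). c r)" using t_mono reached[of "Suc j"] by force
    then show "T j \<le> T (Suc j)" unfolding T_def by (rule Least_le)
  qed
  show "passage_tuples c k t = incr_tuples k T"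
    unfolding passage_tuples_def incr_tuples_def using enat_le_iff by auto
  show small_T: "c r \<le> \<delta>" if "r \<in> {1..T k}" for r
    using that before[of "r - 1" k] small by auto
  show "t j \<le> (\<Sum>r=1..T j. c r) \<and> (\<Sum>r=1..T j. c r) \<le> t j + \<delta>" if "j \<le> k" for j
  proof (cases "T j")
    case 0
    then show ?thesis using reached[OF that] mono_upto_le[OF t_mono, of 0 j] t0 that \<open>0 \<le> \<delta>\<close> by simp
  next
    case (Suc s)
    have "c (T j) \<le> \<delta>" using small_T mono_upto_le[OF mono that order.refl] Suc by simp
    then show ?thesis using reached[OF that] before[of s j] Suc by simp
  qed
qed

lemma block_sum_close:
  fixes c t :: "nat \<Rightarrow> real"
  assumes mono: "\<forall>j<k. T j \<le> T (Suc j)"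
    and close: "\<And>j. j \<le> k \<Longrightarrow> t j \<le> (\<Sum>r=1..T j. c r) \<and> (\<Sum>r=1..T j. c r) \<le> t j + \<delta>"
    and j: "j \<in> {1..k}"
  shows "\<bar>(\<Sum>r\<in>block T j. c r) - (t j - t (j - 1))\<bar> \<le> \<delta>"
proof -
  have "(\<Sum>r\<in>block T j. c r) = (\<Sum>r=1..T j. c r) - (\<Sum>r=1..T (j - 1). c r)"
    unfolding block_def using mono_upto_le[OF mono, of "j - 1" j] j by (intro sum_greaterThanAtMost_eq_diff) auto
  moreover have "j \<le> k" "j - 1 \<le> k" using j by auto
  ultimately show ?thesis using close[of j] close[of "j - 1"] by (simp add: abs_le_iff)
qed

lemma abs_sum_prod_diff_le:
  fixes x y :: "'i \<Rightarrow> 'j \<Rightarrow> real"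
  assumes "1 \<le> L" and x: "\<And>f j. f \<in> I \<Longrightarrow> j \<in> J \<Longrightarrow> \<bar>x f j\<bar> \<le> L" and y: "\<And>f j. f \<in> I \<Longrightarrow> j \<in> J \<Longrightarrow> \<bar>y f j\<bar> \<le> L"
    and close: "\<And>f j. f \<in> I \<Longrightarrow> j \<in> J \<Longrightarrow> \<bar>x f j - y f j\<bar> \<le> \<epsilon>"
  shows "\<bar>(\<Sum>f\<in>I. \<Prod>j\<in>J. x f j) - (\<Sum>f\<in>I. \<Prod>j\<in>J. y f j)\<bar> \<le> real (card I) * (L ^ card J * (real (card J) * \<epsilon>))"
proof -
  have "\<bar>(\<Prod>j\<in>J. x f j) - (\<Prod>j\<in>J. y f j)\<bar> \<le> L ^ card J * (real (card J) * \<epsilon>)" if "f \<in> I" for f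
  proof -
    have "\<bar>(\<Prod>j\<in>J. x f j) - (\<Prod>j\<in>J. y f j)\<bar> \<le> L ^ card J * (\<Sum>j\<in>J. \<bar>x f j - y f j\<bar>)"
      using assms that by (intro abs_prod_diff_le) auto
    also have "\<dots> \<le> L ^ card J * (real (card J) * \<epsilon>)"
      using sum_bounded_above[of J "\<lambda>j. \<bar>x f j - y f j\<bar>" \<epsilon>] close[OF that] \<open>1 \<le> L\<close> by (intro mult_left_mono) auto
    finally show ?thesis .
  qed
  then have "(\<Sum>f\<in>I. \<bar>(\<Prod>j\<in>J. x f j) - (\<Prod>j\<in>J. y f j)\<bar>) \<le> real (card I) * (L ^ card J * (real (card J) * \<epsilon>))"
    by (rule sum_bounded_above)
  then show ?thesis by (simp add: sum_subtractf[symmetric] order.trans[OF sum_abs])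
qed

lemma passage_tuples_sum_approx:
  fixes c t :: "nat \<Rightarrow> real"
  assumes c_nonneg: "\<And>r. 0 \<le> c r" and t0: "t 0 = 0" and t_mono: "\<forall>j<k. t j \<le> t (Suc j)"
    and passed: "\<exists>s. t k \<le> (\<Sum>r=1..s. c r)"
    and small: "\<forall>r\<ge>1. (\<Sum>s=1..r-1. c s) < t k \<longrightarrow> c r \<le> \<delta>" and \<delta>: "0 \<le> \<delta>" "\<delta> \<le> 1"
  shows "\<bar>(\<Sum>r\<in>passage_tuples c k t. \<Prod>i=1..k. c (r i)) - tuple_limit k t\<bar> \<le> approx_const k (t k) * \<delta>"
proof -
  obtain T where T: "T 0 = 0" "\<forall>j<k. T j \<le> T (Suc j)" "passage_tuples c k t = incr_tuples k T"
    "\<And>j. j \<le> k \<Longrightarrow> t j \<le> (\<Sum>r=1..T j. c r) \<and> (\<Sum>r=1..T j. c r) \<le> t j + \<delta>"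
    "\<And>r. r \<in> {1..T k} \<Longrightarrow> c r \<le> \<delta>"
    using passage_indices[OF c_nonneg t0 t_mono passed small \<delta>(1)] by blast
  define L where "L = t k + 2"
  define x where "x f j = elem_sym c (block T j) (ext_idx_gap k f j)" for f j
  define y where "y f j = (t j - t (j - 1)) ^ ext_idx_gap k f j / fact (ext_idx_gap k f j)" for f j
  have t_nonneg: "0 \<le> t j" if "j \<le> k" for j using mono_upto_le[OF t_mono, of 0 j] t0 that by simp
  have bounds: "\<bar>x f j\<bar> \<le> L ^ k" "\<bar>y f j\<bar> \<le> L ^ k" "\<bar>x f j - y f j\<bar> \<le> 2 * real k * L ^ k * \<delta>"
    if f: "f \<in> ituples k" and j: "j \<in> {1..k}" for f j
  proof -
    have c_le: "c r \<le> \<delta>" if "r \<in> block T j" for r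
      using that T(5) mono_upto_le[OF T(2), of j k] j unfolding block_def by auto
    have jk: "j - 1 \<le> j" "j \<le> k" "j - 1 \<le> k" using j by auto
    have D: "0 \<le> t j - t (j - 1)" "t j - t (j - 1) + 2 \<le> L"
      using mono_upto_le[OF t_mono jk(1,2)] mono_upto_le[OF t_mono jk(2) order.refl] t_nonneg[OF jk(3)]
      unfolding L_def by auto
    note approx = elem_sym_block_approx[OF _ c_nonneg c_le \<delta> block_sum_close[OF T(2,4) j] D ext_idx_gap_le[OF f]]
    show "\<bar>x f j\<bar> \<le> L ^ k" "\<bar>y f j\<bar> \<le> L ^ k" "\<bar>x f j - y f j\<bar> \<le> 2 * real k * L ^ k * \<delta>"
      using approx unfolding x_def y_def by (simp_all add: block_def)
  qed
  have "(\<Sum>r\<in>passage_tuples c k t. \<Prod>i=1..k. c (r i)) = (\<Sum>f\<in>ituples k. \<Prod>j=1..k. x f j)"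
    unfolding T(3) sum_incr_tuples_eq_sum_staircase_sets sum_staircase_sets_eq_sum_ituples[OF T(1,2)] x_def ..
  moreover have "\<bar>(\<Sum>f\<in>ituples k. \<Prod>j=1..k. x f j) - (\<Sum>f\<in>ituples k. \<Prod>j=1..k. y f j)\<bar>
      \<le> real (card (ituples k)) * ((L ^ k) ^ card {1..k} * (real (card {1..k}) * (2 * real k * L ^ k * \<delta>)))"
    using bounds t_nonneg[of k] unfolding L_def by (intro abs_sum_prod_diff_le) auto
  ultimately show ?thesis
    unfolding tuple_limit_def approx_const_def y_def L_def by (simp add: algebra_simps)
qed

text \<open>Only the indices r up to the passage of u contribute, and their contributions add up to less
  than u plus one last increment.\<close>
lemma sum_before_passage_le:
  fixes c :: "nat \<Rightarrow> real"
  assumes c_nonneg: "\<And>r. 1 \<le> r \<Longrightarrow> 0 \<le> c r" and c_le_1: "\<And>r. 1 \<le> r \<Longrightarrow> c r \<le> 1" and "0 \<le> u"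
  shows "(\<Sum>r=1..n. if (\<Sum>s=1..r-1. c s) < u then c r else 0) \<le> u + 1"
proof -
  define C where "C n = (\<Sum>s=1..n. c s)" for n
  define S where "S n = (\<Sum>r=1..n. if C (r - 1) < u then c r else 0)" for n
  have "((n = 0 \<or> C (n - 1) < u) \<longrightarrow> S n = C n) \<and> S n \<le> u + 1"
  proof (induction n)
    case 0
    then show ?case using \<open>0 \<le> u\<close> by (simp add: S_def C_def)
  next
    case (Suc n)
    have S_Suc: "S (Suc n) = S n + (if C n < u then c (Suc n) else 0)" unfolding S_def by simp
    show ?case
    proof (cases "C n < u")
      case True
      have "C (n - 1) \<le> C n" unfolding C_def using c_nonneg by (intro sum_mono2) auto
      then have "S n = C n" using Suc.IH True by auto
      then have "S (Suc n) = C (Suc n)" using S_Suc True unfolding C_def by simp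
      moreover have "C (Suc n) \<le> u + 1" using True c_le_1[of "Suc n"] unfolding C_def by simp
      ultimately show ?thesis by simp
    next
      case False
      then show ?thesis using S_Suc Suc.IH by simp
    qed
  qed
  then show ?thesis unfolding S_def C_def by simp
qed

definition bounded_tuples :: "nat \<Rightarrow> nat \<Rightarrow> (nat \<Rightarrow> nat) set" where
  "bounded_tuples k n = {r. (\<forall>i. i \<notin> {1..k} \<longrightarrow> r i = 0) \<and> (\<forall>i\<in>{1..k}. r i \<le> n)}"

lemma finite_bounded_tuples: "finite (bounded_tuples k n)"
proof (rule finite_subset)
  show "bounded_tuples k n \<subseteq> (\<lambda>g i. if i \<in> {1..k} then g i else 0) ` PiE {1..k} (\<lambda>_. {0..n})"
  proof
    fix r assume r: "r \<in> bounded_tuples k n"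
    then have "restrict r {1..k} \<in> PiE {1..k} (\<lambda>_. {0..n})"
      and "r = (\<lambda>i. if i \<in> {1..k} then restrict r {1..k} i else 0)"
      unfolding bounded_tuples_def by auto
    then show "r \<in> (\<lambda>g i. if i \<in> {1..k} then g i else 0) ` PiE {1..k} (\<lambda>_. {0..n})" by blast
  qed
qed (intro finite_imageI finite_PiE; simp)

lemma passage_tuple_in_bounded_tuples:
  "r \<in> passage_tuples c k t \<Longrightarrow> r \<in> bounded_tuples k (\<Sum>i\<in>{1..k}. r i)"
  unfolding passage_tuples_def bounded_tuples_def by (auto intro: member_le_sum)

text \<open>Quantifying over the countably many finite sets bounded_tuples k m makes finiteness of
  the index set a measurable event.\<close>
lemma finite_passage_tuples_iff:
  "finite (passage_tuples c k t)
    \<longleftrightarrow> (\<exists>n. \<forall>m. \<forall>r\<in>bounded_tuples k m. r \<in> passage_tuples c k t \<longrightarrow> r \<in> bounded_tuples k n)"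
proof
  assume fin: "finite (passage_tuples c k t)"
  define n where "n = (\<Sum>r\<in>passage_tuples c k t. \<Sum>i\<in>{1..k}. r i)"
  have "r \<in> bounded_tuples k n" if "r \<in> passage_tuples c k t" for r
    using passage_tuple_in_bounded_tuples[OF that] member_le_sum[OF that, of "\<lambda>r. \<Sum>i\<in>{1..k}. r i"] fin
    unfolding n_def bounded_tuples_def by fastforce
  then show "\<exists>n. \<forall>m. \<forall>r\<in>bounded_tuples k m. r \<in> passage_tuples c k t \<longrightarrow> r \<in> bounded_tuples k n" by blast
next
  assume "\<exists>n. \<forall>m. \<forall>r\<in>bounded_tuples k m. r \<in> passage_tuples c k t \<longrightarrow> r \<in> bounded_tuples k n"
  then have "\<exists>n. passage_tuples c k t \<subseteq> bounded_tuples k n" using passage_tuple_in_bounded_tuples by blast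
  then show "finite (passage_tuples c k t)" using finite_bounded_tuples finite_subset by blast
qed

lemma mem_passage_tuples_iff:
  fixes c :: "nat \<Rightarrow> real"
  assumes "\<And>r. 0 \<le> c r"
  shows "r \<in> passage_tuples c k t \<longleftrightarrow> (\<forall>i. i \<notin> {1..k} \<longrightarrow> r i = 0) \<and> (\<forall>i\<in>{1..<k}. r i < r (i+1))
      \<and> (\<forall>i\<in>{1..k}. 1 \<le> r i \<and> (\<Sum>s=1..r i - 1. c s) < t i)"
  unfolding passage_tuples_def using enat_le_passage_time_iff[OF assms] by auto

section \<open>Coalescence probabilities and the natural filtration\<close>

lemma ffact_r_2: "ffact_r x 2 = x * (x - 1)"
  by (simp add: ffact_r_def numeral_2_eq_2)

lemma ffact_r_3: "ffact_r x 3 = x * (x - 1) * (x - 2)"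
  by (simp add: ffact_r_def numeral_3_eq_3 numeral_2_eq_2)

lemma ffact_r_2_nat_nonneg: "0 \<le> ffact_r (real n) 2"
  unfolding ffact_r_2 by (cases n) auto

lemma ffact_r_3_nat_nonneg: "0 \<le> ffact_r (real n) 3"
  unfolding ffact_r_3 by (cases "n \<le> 1") (auto simp: not_le le_Suc_eq)

lemma abs_ffact_r_le: "\<bar>ffact_r x k\<bar> \<le> (\<bar>x\<bar> + real k) ^ k"
proof -
  have "\<bar>ffact_r x k\<bar> = (\<Prod>j<k. \<bar>x - real j\<bar>)" unfolding ffact_r_def by (simp add: abs_prod)
  also have "\<dots> \<le> (\<Prod>j<k. \<bar>x\<bar> + real k)" by (intro prod_mono) auto
  finally show ?thesis by simp
qed

lemma ratio_sq_le_of_sq_le: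
  fixes S2 S3 n :: real
  assumes CS: "S2^2 \<le> n * (S3 + S2)" and "0 \<le> S3" and n: "3 \<le> n"
  shows "(S2 / (n * (n - 1)))^2 \<le> S3 / (n * (n - 1) * (n - 2)) + S2 / (n * (n - 1)) / (n - 1)"
proof -
  have "S2^2 * (n - 2) \<le> n * (S3 + S2) * (n - 2)" using CS n by (intro mult_right_mono) auto
  also have "\<dots> \<le> S3 * n * (n - 1) + S2 * n * (n - 2)"
    using n \<open>0 \<le> S3\<close> by (simp add: algebra_simps mult_left_mono)
  finally have key: "S2^2 * (n - 2) \<le> S3 * n * (n - 1) + S2 * n * (n - 2)" .
  define Q where "Q = (n * (n - 1))^2 * (n - 2)"
  have Q: "0 < Q" unfolding Q_def using n by simp
  have nz: "n * (n - 1) * (n - 2) \<noteq> 0" "n * (n - 1) * (n - 1) \<noteq> 0" using n by auto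
  have "(S2 / (n * (n - 1)))^2 = S2^2 * (n - 2) / Q"
    using n unfolding Q_def by (simp add: power_divide)
  also have "\<dots> \<le> (S3 * n * (n - 1) + S2 * n * (n - 2)) / Q"
    using key Q by (rule divide_right_mono[OF _ less_imp_le])
  also have "\<dots> = S3 / (n * (n - 1) * (n - 2)) + S2 / (n * (n - 1) * (n - 1))"
  proof -
    have "S3 * n * (n - 1) / Q = S3 / (n * (n - 1) * (n - 2))"
      using nz Q unfolding Q_def by (subst frac_eq_eq) (auto simp: power2_eq_square algebra_simps)
    moreover have "S2 * n * (n - 2) / Q = S2 / (n * (n - 1) * (n - 1))"
      using nz Q unfolding Q_def by (subst frac_eq_eq) (auto simp: power2_eq_square algebra_simps)
    ultimately show ?thesis by (simp add: add_divide_distrib)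
  qed
  finally show ?thesis by simp
qed

text \<open>By Cauchy-Schwarz, offspring numbers a_i summing to N satisfy
  (\<Sum>(a_i)_2)^2 \<le> N (\<Sum>(a_i)_3 + \<Sum>(a_i)_2).\<close>
lemma ffact_r_2_ratio_sq_le:
  fixes a :: "nat \<Rightarrow> nat"
  assumes total: "(\<Sum>i=1..N. a i) = N" and N: "N \<ge> 3"
  shows "((\<Sum>i=1..N. ffact_r (real (a i)) 2) / ffact_r (real N) 2)^2
    \<le> (\<Sum>i=1..N. ffact_r (real (a i)) 3) / ffact_r (real N) 3
      + (\<Sum>i=1..N. ffact_r (real (a i)) 2) / ffact_r (real N) 2 / (real N - 1)"
proof -
  define S2 where "S2 = (\<Sum>i=1..N. ffact_r (real (a i)) 2)"
  define S3 where "S3 = (\<Sum>i=1..N. ffact_r (real (a i)) 3)"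
  have S2_eq: "S2 = (\<Sum>i=1..N. sqrt (a i) * (sqrt (a i) * (real (a i) - 1)))"
    unfolding S2_def ffact_r_2 by (intro sum.cong) (auto simp: mult.assoc[symmetric])
  have "S2^2 \<le> (\<Sum>i=1..N. (sqrt (a i))^2) * (\<Sum>i=1..N. (sqrt (a i) * (real (a i) - 1))^2)"
    unfolding S2_eq by (rule Cauchy_Schwarz_ineq_sum)
  also have "(\<Sum>i=1..N. (sqrt (a i))^2) = real N"
    using total by (simp flip: of_nat_sum)
  also have "(\<Sum>i=1..N. (sqrt (a i) * (real (a i) - 1))^2) = S3 + S2"
    unfolding S3_def S2_def ffact_r_2 ffact_r_3 sum.distrib[symmetric]
    by (intro sum.cong) (auto simp: power_mult_distrib power2_eq_square algebra_simps)
  finally have "S2^2 \<le> real N * (S3 + S2)" .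
  moreover have "0 \<le> S3" unfolding S3_def by (intro sum_nonneg ffact_r_3_nat_nonneg)
  ultimately show ?thesis
    using ratio_sq_le_of_sq_le[of S2 "real N" S3] N
    unfolding S2_def S3_def ffact_r_2[of "real N"] ffact_r_3[of "real N"] by simp
qed

lemma cN_nonneg [simp]: "0 \<le> cN nu N r \<omega>"
  unfolding cN_def by (intro divide_nonneg_nonneg sum_nonneg ffact_r_2_nat_nonneg)

definition dN :: "(nat \<Rightarrow> nat \<Rightarrow> nat \<Rightarrow> 'a \<Rightarrow> nat) \<Rightarrow> nat \<Rightarrow> nat \<Rightarrow> 'a \<Rightarrow> real" where
  "dN nu N r \<omega> = (\<Sum>i=1..N. ffact_r (real (nu N r i \<omega>)) 3) / ffact_r (real N) 3"

lemma cN_sq_le: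
  assumes "(\<Sum>i=1..N. nu N r i \<omega>) = N" "N \<ge> 3"
  shows "(cN nu N r \<omega>)^2 \<le> dN nu N r \<omega> + cN nu N r \<omega> / (real N - 1)"
  unfolding cN_def dN_def using ffact_r_2_ratio_sq_le[OF assms] .

lemma tauN_eq_passage_time: "tauN nu N u \<omega> = passage_time (\<lambda>r. cN nu N r \<omega>) u"
  unfolding tauN_def passage_time_def ..

lemma rtuples_eq_passage_tuples: "rtuples nu N k t \<omega> = passage_tuples (\<lambda>r. cN nu N r \<omega>) k t"
  unfolding rtuples_def passage_tuples_def tauN_eq_passage_time ..

lemma space_filt: "space (filt M nu N t) = space (M N)"
  unfolding filt_def by (rule space_measure_of) auto

lemma sets_filt:
  "sets (filt M nu N t) = sigma_sets (space (M N))
     {nu N s i -` A \<inter> space (M N) | s i A. 1 \<le> s \<and> s \<le> t \<and> 1 \<le> i \<and> i \<le> N}"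
  unfolding filt_def by (rule sets_measure_of) auto

lemma measurable_nu_filt:
  assumes "1 \<le> s" "s \<le> t" "1 \<le> i" "i \<le> N"
  shows "nu N s i \<in> measurable (filt M nu N t) (count_space UNIV)"
proof (rule measurableI)
  fix A :: "nat set"
  have "nu N s i -` A \<inter> space (M N)
      \<in> {nu N s i -` A \<inter> space (M N) | s i A. 1 \<le> s \<and> s \<le> t \<and> 1 \<le> i \<and> i \<le> N}"
    using assms by blast
  then show "nu N s i -` A \<inter> space (filt M nu N t) \<in> sets (filt M nu N t)"
    unfolding space_filt sets_filt by (rule sigma_sets.Basic)
qed simp

lemma borel_measurable_cN:
  assumes "\<And>i. 1 \<le> i \<Longrightarrow> i \<le> N \<Longrightarrow> nu N r i \<in> measurable M' (count_space UNIV)"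
  shows "cN nu N r \<in> borel_measurable M'"
proof -
  have "(\<lambda>\<omega>. ffact_r (real (nu N r i \<omega>)) 2) \<in> borel_measurable M'" if "i \<in> {1..N}" for i
    using measurable_compose[OF assms, of i "\<lambda>n. ffact_r (real n) 2" borel] that by simp
  then show ?thesis unfolding cN_def[abs_def] by measurable
qed

lemma borel_measurable_partial_sum_cN_filt:
  assumes "s \<le> t"
  shows "(\<lambda>\<omega>. \<Sum>r=1..s. cN nu N r \<omega>) \<in> borel_measurable (filt M nu N t)"
  using assms by (intro borel_measurable_sum borel_measurable_cN measurable_nu_filt) auto

lemma (in sigma_finite_subalgebra) integral_indicator_sum_real_cond_exp:
  assumes A: "A \<in> sets F" and f: "\<And>i. i \<in> I \<Longrightarrow> integrable M (f i)"
  shows "integrable M (\<lambda>x. indicator A x * (\<Sum>i\<in>I. real_cond_exp M F (f i) x))"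
    and "(\<integral>x. indicator A x * (\<Sum>i\<in>I. real_cond_exp M F (f i) x) \<partial>M)
       = (\<integral>x. indicator A x * (\<Sum>i\<in>I. f i x) \<partial>M)"
proof -
  have A_M: "A \<in> sets M" using A subalg by (auto simp: subalgebra_def)
  have int: "integrable M (\<lambda>x. indicator A x * f i x)" if "i \<in> I" for i
    using integrable_mult_indicator[OF A_M f[OF that]] by simp
  note cond_exp = real_cond_exp_intg[OF int borel_measurable_indicator[OF A] borel_measurable_integrable[OF f]]
  show "integrable M (\<lambda>x. indicator A x * (\<Sum>i\<in>I. real_cond_exp M F (f i) x))"
    using cond_exp(1) by (simp add: sum_distrib_left)
  show "(\<integral>x. indicator A x * (\<Sum>i\<in>I. real_cond_exp M F (f i) x) \<partial>M)
      = (\<integral>x. indicator A x * (\<Sum>i\<in>I. f i x) \<partial>M)"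
    using cond_exp int by (simp add: sum_distrib_left)
qed

lemma (in prob_space) abs_integral_indicator_diff_le:
  assumes X: "X \<in> borel_measurable M" and E: "E \<in> events" and H: "H \<in> events"
    and "0 \<le> a" "0 \<le> K" and bound: "AE \<omega> in M. \<bar>X \<omega> - V\<bar> \<le> a + K * indicator H \<omega>"
  shows "\<bar>(\<integral>\<omega>. indicator E \<omega> * X \<omega> \<partial>M) - V\<bar> \<le> a + K * prob H + \<bar>V\<bar> * \<bar>1 - prob E\<bar>"
proof -
  have int_X: "integrable M (\<lambda>\<omega>. indicator E \<omega> * X \<omega>)"
  proof (rule integrable_const_bound[where B = "\<bar>V\<bar> + a + K"])
    show "AE \<omega> in M. norm (indicator E \<omega> * X \<omega>) \<le> \<bar>V\<bar> + a + K"
      using bound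
    proof eventually_elim
      case (elim \<omega>)
      have "\<bar>X \<omega>\<bar> \<le> \<bar>X \<omega> - V\<bar> + \<bar>V\<bar>" by linarith
      moreover have "K * indicator H \<omega> \<le> K" using \<open>0 \<le> K\<close> by (simp add: indicator_def)
      ultimately show ?case using elim \<open>0 \<le> a\<close> \<open>0 \<le> K\<close> by (simp add: indicator_def abs_mult)
    qed
  qed (use X E in measurable)
  have int_E: "integrable M (\<lambda>\<omega>. V * indicator E \<omega>)"
    using E by (intro integrable_mult_right integrable_real_indicator) (auto simp: less_top[symmetric])
  have int_H: "integrable M (\<lambda>\<omega>. a + K * indicator H \<omega>)"
    using H by (intro Bochner_Integration.integrable_add integrable_mult_right integrable_real_indicator)
      (auto simp: less_top[symmetric])
  define D where "D = (\<integral>\<omega>. indicator E \<omega> * X \<omega> - V * indicator E \<omega> \<partial>M)"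
  have "(\<integral>\<omega>. indicator E \<omega> * X \<omega> \<partial>M) - V = D - V * (1 - prob E)"
    unfolding D_def using int_X int_E E by (simp add: Bochner_Integration.integral_diff algebra_simps)
  then have "\<bar>(\<integral>\<omega>. indicator E \<omega> * X \<omega> \<partial>M) - V\<bar> \<le> \<bar>D\<bar> + \<bar>V\<bar> * \<bar>1 - prob E\<bar>"
    using abs_triangle_ineq4[of D "V * (1 - prob E)"] by (simp add: abs_mult)
  moreover have "\<bar>D\<bar> \<le> (\<integral>\<omega>. a + K * indicator H \<omega> \<partial>M)"
    unfolding D_def
  proof (rule order.trans[OF integral_abs_bound integral_mono_AE])
    show "AE \<omega> in M. \<bar>indicator E \<omega> * X \<omega> - V * indicator E \<omega>\<bar> \<le> a + K * indicator H \<omega>"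
      using bound by eventually_elim (auto simp: indicator_def \<open>0 \<le> a\<close> \<open>0 \<le> K\<close>)
  qed (use int_X int_E int_H in auto)
  moreover have "(\<integral>\<omega>. a + K * indicator H \<omega> \<partial>M) = (\<integral>\<omega>. a \<partial>M) + (\<integral>\<omega>. K * indicator H \<omega> \<partial>M)"
    by (rule Bochner_Integration.integral_add) (use H in \<open>auto simp: less_top[symmetric]\<close>)
  moreover have "(\<integral>\<omega>. K * indicator H \<omega> \<partial>M) = K * prob H"
    using H by (simp add: Int_absorb2[OF sets.sets_into_space])
  ultimately show ?thesis by (simp add: prob_space Int_absorb2[OF sets.sets_into_space[OF H]])
qed

lemma LIMSEQ_one_over_real_minus_one: "(\<lambda>N. 1 / (real N - 1)) \<longlonglongrightarrow> 0"
proof -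
  have "(\<lambda>N. 1 / (real (Suc N) - 1)) \<longlonglongrightarrow> 0" using lim_const_over_n[of 1] by simp
  then show ?thesis by (rule filterlim_sequentially_Suc[THEN iffD1])
qed

lemma tendsto_of_approx_bounds:
  fixes x g :: "nat \<Rightarrow> real"
  assumes "0 \<le> K" and g: "g \<longlonglongrightarrow> 0"
    and bound: "\<And>\<delta>. 0 < \<delta> \<Longrightarrow> \<delta> \<le> 1 \<Longrightarrow> \<forall>\<^sub>F N in sequentially. \<bar>x N - V\<bar> \<le> K * \<delta> + g N / \<delta>^2"
  shows "x \<longlonglongrightarrow> V"
proof (rule tendstoI)
  fix \<epsilon> :: real assume "0 < \<epsilon>"
  define \<delta> where "\<delta> = min 1 (\<epsilon> / (2 * (K + 1)))"
  have \<delta>: "0 < \<delta>" "\<delta> \<le> 1" unfolding \<delta>_def using \<open>0 < \<epsilon>\<close> \<open>0 \<le> K\<close> by auto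
  have "K * \<delta> \<le> K * (\<epsilon> / (2 * (K + 1)))" unfolding \<delta>_def using \<open>0 \<le> K\<close> by (intro mult_left_mono) auto
  also have "\<dots> < \<epsilon> / 2" using \<open>0 < \<epsilon>\<close> \<open>0 \<le> K\<close> by (simp add: field_simps)
  finally have K\<delta>: "K * \<delta> < \<epsilon> / 2" .
  have "0 < \<epsilon> / 2 * \<delta>^2" using \<open>0 < \<epsilon>\<close> \<delta> by simp
  from order_tendstoD(2)[OF g this] have "\<forall>\<^sub>F N in sequentially. g N < \<epsilon> / 2 * \<delta>^2" .
  with bound[OF \<delta>] show "\<forall>\<^sub>F N in sequentially. dist (x N) V < \<epsilon>"
  proof eventually_elim
    case (elim N)
    then have "g N / \<delta>^2 < \<epsilon> / 2" using \<delta> by (simp add: divide_less_eq)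
    then show ?case using elim K\<delta> unfolding dist_real_def by linarith
  qed
qed

section \<open>A single model satisfying the moment condition\<close>

locale moment_bounded_model =
  fixes M :: "nat \<Rightarrow> 'a measure" and nu :: "nat \<Rightarrow> nat \<Rightarrow> nat \<Rightarrow> 'a \<Rightarrow> nat" and N :: nat and b :: real
  assumes prob_space_M: "prob_space (M N)"
    and measurable_nu: "\<And>s i. nu N s i \<in> measurable (M N) (count_space UNIV)"
    and total: "\<And>s \<omega>. s \<ge> 1 \<Longrightarrow> \<omega> \<in> space (M N) \<Longrightarrow> (\<Sum>i=1..N. nu N s i \<omega>) = N"
    and N3: "N \<ge> 3"
    and moment: "\<forall>s\<ge>1. AE \<omega> in M N.
        (\<Sum>i=1..N. real_cond_exp (M N) (filt M nu N (s - 1)) (\<lambda>x. ffact_r (real (nu N s i x)) 3) \<omega>)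
          / ffact_r (real N) 3
        \<le> b * ((\<Sum>i=1..N. real_cond_exp (M N) (filt M nu N (s - 1)) (\<lambda>x. ffact_r (real (nu N s i x)) 2) \<omega>)
          / ffact_r (real N) 2)"
begin

sublocale prob_space "M N" by (rule prob_space_M)

lemma cN_le_1:
  assumes "r \<ge> 1" "\<omega> \<in> space (M N)"
  shows "cN nu N r \<omega> \<le> 1"
proof -
  note total = total[OF assms]
  have "(\<Sum>i=1..N. ffact_r (real (nu N r i \<omega>)) 2) \<le> (\<Sum>i=1..N. real (nu N r i \<omega>) * (real N - 1))"
  proof (rule sum_mono)
    fix i assume "i \<in> {1..N}"
    then have "nu N r i \<omega> \<le> N" using total member_le_sum[of i "{1..N}" "\<lambda>i. nu N r i \<omega>"] by simp
    then show "ffact_r (real (nu N r i \<omega>)) 2 \<le> real (nu N r i \<omega>) * (real N - 1)"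
      unfolding ffact_r_2 by (intro mult_left_mono) auto
  qed
  also have "\<dots> = ffact_r (real N) 2"
    using total unfolding ffact_r_2 sum_distrib_right[symmetric] by (simp flip: of_nat_sum)
  finally show ?thesis unfolding cN_def using N3 by (simp add: ffact_r_2)
qed

lemma measurable_cN [measurable]: "cN nu N r \<in> borel_measurable (M N)"
  by (intro borel_measurable_cN measurable_nu)

lemma subalgebra_filt: "subalgebra (M N) (filt M nu N t)"
  unfolding subalgebra_def space_filt sets_filt
  using measurable_sets[OF measurable_nu] by (auto intro!: sets.sigma_sets_subset)

lemma sets_filt_subset: "F \<in> sets (filt M nu N t) \<Longrightarrow> F \<in> sets (M N)"
  using subalgebra_filt by (auto simp: subalgebra_def)

lemma integrable_ffact_r:
  assumes "s \<ge> 1" "i \<in> {1..N}"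
  shows "integrable (M N) (\<lambda>x. ffact_r (real (nu N s i x)) k)"
proof (rule integrable_const_bound[where B = "(real N + real k) ^ k"])
  show "AE x in M N. norm (ffact_r (real (nu N s i x)) k) \<le> (real N + real k) ^ k"
  proof (rule AE_I2)
    fix x assume "x \<in> space (M N)"
    then have "nu N s i x \<le> N" using total[OF assms(1)] member_le_sum[OF assms(2), of "\<lambda>i. nu N s i x"] by simp
    then show "norm (ffact_r (real (nu N s i x)) k) \<le> (real N + real k) ^ k"
      using abs_ffact_r_le[of "real (nu N s i x)" k] by (simp add: order_trans[OF _ power_mono])
  qed
  show "(\<lambda>x. ffact_r (real (nu N s i x)) k) \<in> borel_measurable (M N)"
    using measurable_compose[OF measurable_nu[of s i], of "\<lambda>n. ffact_r (real n) k" borel] by simp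
qed

lemma integrable_indicator_cN_power:
  assumes "F \<in> sets (M N)" "r \<ge> 1"
  shows "integrable (M N) (\<lambda>\<omega>. indicator F \<omega> * cN nu N r \<omega> ^ m)"
proof (rule integrable_const_bound[where B = 1])
  show "AE \<omega> in M N. norm (indicator F \<omega> * cN nu N r \<omega> ^ m) \<le> 1"
    using cN_le_1[OF assms(2)] by (intro AE_I2) (auto simp: indicator_def power_le_one)
qed (use assms(1) in measurable)

lemma integrable_indicator_cN:
  "F \<in> sets (M N) \<Longrightarrow> r \<ge> 1 \<Longrightarrow> integrable (M N) (\<lambda>\<omega>. indicator F \<omega> * cN nu N r \<omega>)"
  using integrable_indicator_cN_power[of F r 1] by simp

lemma integral_indicator_dN_le:
  assumes r: "r \<ge> 1" and F: "F \<in> sets (filt M nu N (r - 1))"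
  shows "(\<integral>\<omega>. indicator F \<omega> * dN nu N r \<omega> \<partial>M N) \<le> b * (\<integral>\<omega>. indicator F \<omega> * cN nu N r \<omega> \<partial>M N)"
proof -
  interpret sub: finite_measure_subalgebra "M N" "filt M nu N (r - 1)"
    by unfold_locales (rule subalgebra_filt)
  define g where "g k i = (\<lambda>x. ffact_r (real (nu N r i x)) k)" for k i
  define ce where "ce k \<omega> = (\<Sum>i=1..N. real_cond_exp (M N) (filt M nu N (r - 1)) (g k i) \<omega>)" for k \<omega>
  have int: "\<And>i. i \<in> {1..N} \<Longrightarrow> integrable (M N) (g k i)" for k
    unfolding g_def using r by (rule integrable_ffact_r)
  have ce_int: "integrable (M N) (\<lambda>\<omega>. indicator F \<omega> * ce k \<omega>)" for k
    unfolding ce_def by (rule sub.integral_indicator_sum_real_cond_exp(1)[OF F int])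
  have ce_eq: "(\<integral>\<omega>. indicator F \<omega> * ce k \<omega> \<partial>M N) = (\<integral>\<omega>. indicator F \<omega> * (\<Sum>i=1..N. g k i \<omega>) \<partial>M N)" for k
    unfolding ce_def by (rule sub.integral_indicator_sum_real_cond_exp(2)[OF F int])
  have "(\<integral>\<omega>. indicator F \<omega> * dN nu N r \<omega> \<partial>M N)
      = (\<integral>\<omega>. indicator F \<omega> * ce 3 \<omega> \<partial>M N) / ffact_r (real N) 3"
    using ce_eq[of 3] unfolding dN_def g_def by simp
  also have "\<dots> \<le> (\<integral>\<omega>. indicator F \<omega> * (b * ce 2 \<omega> / ffact_r (real N) 2) \<partial>M N)"
  proof -
    have "AE \<omega> in M N. ce 3 \<omega> / ffact_r (real N) 3 \<le> b * (ce 2 \<omega> / ffact_r (real N) 2)"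
      using moment r unfolding ce_def g_def by auto
    then have "AE \<omega> in M N. indicator F \<omega> * (ce 3 \<omega> / ffact_r (real N) 3)
        \<le> indicator F \<omega> * (b * ce 2 \<omega> / ffact_r (real N) 2)"
      by eventually_elim (simp add: indicator_def)
    moreover have "integrable (M N) (\<lambda>\<omega>. indicator F \<omega> * (ce 3 \<omega> / ffact_r (real N) 3))"
      using integrable_divide_zero[OF ce_int[of 3]] by simp
    moreover have "integrable (M N) (\<lambda>\<omega>. b * (indicator F \<omega> * ce 2 \<omega>) / ffact_r (real N) 2)"
      using ce_int[of 2] by (intro integrable_divide_zero integrable_mult_right)
    then have "integrable (M N) (\<lambda>\<omega>. indicator F \<omega> * (b * ce 2 \<omega> / ffact_r (real N) 2))"
      by (simp add: mult.left_commute)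
    ultimately have "(\<integral>\<omega>. indicator F \<omega> * (ce 3 \<omega> / ffact_r (real N) 3) \<partial>M N)
        \<le> (\<integral>\<omega>. indicator F \<omega> * (b * ce 2 \<omega> / ffact_r (real N) 2) \<partial>M N)"
      by (intro integral_mono_AE)
    then show ?thesis by simp
  qed
  also have "\<dots> = b * (\<integral>\<omega>. indicator F \<omega> * cN nu N r \<omega> \<partial>M N)"
    using ce_eq[of 2] unfolding cN_def g_def by (simp add: mult.left_commute)
  finally show ?thesis .
qed

lemma integral_indicator_cN_sq_le:
  assumes r: "r \<ge> 1" and F: "F \<in> sets (filt M nu N (r - 1))"
  shows "(\<integral>\<omega>. indicator F \<omega> * cN nu N r \<omega> ^ 2 \<partial>M N)
    \<le> (\<bar>b\<bar> + 1 / (real N - 1)) * (\<integral>\<omega>. indicator F \<omega> * cN nu N r \<omega> \<partial>M N)"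
proof -
  have F_M: "F \<in> sets (M N)" using F by (rule sets_filt_subset)
  have int_c: "integrable (M N) (\<lambda>\<omega>. indicator F \<omega> * cN nu N r \<omega>)"
    using F_M r by (rule integrable_indicator_cN)
  have "integrable (M N) (\<lambda>\<omega>. dN nu N r \<omega>)"
    unfolding dN_def by (intro integrable_divide_zero Bochner_Integration.integrable_sum integrable_ffact_r[OF r])
  from integrable_mult_indicator[OF F_M this]
  have int_d: "integrable (M N) (\<lambda>\<omega>. indicator F \<omega> * dN nu N r \<omega>)" by simp
  have I_nonneg: "0 \<le> (\<integral>\<omega>. indicator F \<omega> * cN nu N r \<omega> \<partial>M N)"
    by (intro integral_nonneg_AE AE_I2) simp
  have "(\<integral>\<omega>. indicator F \<omega> * cN nu N r \<omega> ^ 2 \<partial>M N)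
      \<le> (\<integral>\<omega>. indicator F \<omega> * dN nu N r \<omega> + indicator F \<omega> * cN nu N r \<omega> / (real N - 1) \<partial>M N)"
  proof (rule integral_mono)
    fix \<omega> assume "\<omega> \<in> space (M N)"
    then show "indicator F \<omega> * cN nu N r \<omega> ^ 2
        \<le> indicator F \<omega> * dN nu N r \<omega> + indicator F \<omega> * cN nu N r \<omega> / (real N - 1)"
      using cN_sq_le[where nu = nu and r = r and \<omega> = \<omega>, OF total[OF r \<open>\<omega> \<in> space (M N)\<close>] N3]
      by (simp add: indicator_def)
  qed (use integrable_indicator_cN_power[OF F_M r] int_c int_d in auto)
  also have "\<dots> = (\<integral>\<omega>. indicator F \<omega> * dN nu N r \<omega> \<partial>M N)
      + (\<integral>\<omega>. indicator F \<omega> * cN nu N r \<omega> \<partial>M N) / (real N - 1)"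
    using int_c int_d by simp
  also have "\<dots> \<le> (\<bar>b\<bar> + 1 / (real N - 1)) * (\<integral>\<omega>. indicator F \<omega> * cN nu N r \<omega> \<partial>M N)"
    using integral_indicator_dN_le[OF r F] mult_right_mono[OF abs_ge_self[of b] I_nonneg]
    by (simp add: algebra_simps)
  finally show ?thesis .
qed

lemma measure_cN_gt_le:
  assumes r: "r \<ge> 1" and F: "F \<in> sets (filt M nu N (r - 1))" and "\<delta> > 0"
  shows "measure (M N) (F \<inter> {\<omega>. \<delta> < cN nu N r \<omega>})
    \<le> (\<bar>b\<bar> + 1 / (real N - 1)) / \<delta>^2 * (\<integral>\<omega>. indicator F \<omega> * cN nu N r \<omega> \<partial>M N)"
proof -
  have F_M: "F \<in> sets (M N)" using F by (rule sets_filt_subset)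
  define A where "A = F \<inter> {\<omega> \<in> space (M N). \<delta> < cN nu N r \<omega>}"
  have A_M: "A \<in> sets (M N)" unfolding A_def using F_M by measurable
  have "F \<inter> {\<omega>. \<delta> < cN nu N r \<omega>} = A" using sets.sets_into_space[OF F_M] unfolding A_def by auto
  moreover have "measure (M N) A \<le> (\<integral>\<omega>. indicator F \<omega> * cN nu N r \<omega> ^ 2 / \<delta>^2 \<partial>M N)"
  proof -
    have "measure (M N) A = (\<integral>\<omega>. indicator A \<omega> \<partial>M N)" using A_M by simp
    also have "\<dots> \<le> (\<integral>\<omega>. indicator F \<omega> * cN nu N r \<omega> ^ 2 / \<delta>^2 \<partial>M N)"
    proof (rule integral_mono)
      fix \<omega> show "indicator A \<omega> \<le> indicator F \<omega> * cN nu N r \<omega> ^ 2 / \<delta>^2"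
        using \<open>\<delta> > 0\<close> power_strict_mono[of \<delta> "cN nu N r \<omega>" 2] unfolding A_def
        by (auto simp: indicator_def)
    qed (use A_M integrable_indicator_cN_power[OF F_M r] in \<open>auto simp: less_top[symmetric]\<close>)
    finally show ?thesis .
  qed
  moreover have "(\<integral>\<omega>. indicator F \<omega> * cN nu N r \<omega> ^ 2 / \<delta>^2 \<partial>M N)
      \<le> (\<bar>b\<bar> + 1 / (real N - 1)) / \<delta>^2 * (\<integral>\<omega>. indicator F \<omega> * cN nu N r \<omega> \<partial>M N)"
    using integral_indicator_cN_sq_le[OF r F] \<open>\<delta> > 0\<close> by (simp add: divide_right_mono)
  ultimately show ?thesis by simp
qed

definition before_passage :: "nat \<Rightarrow> real \<Rightarrow> 'a set" where
  "before_passage r u = {\<omega> \<in> space (M N). (\<Sum>s=1..r-1. cN nu N s \<omega>) < u}"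

lemma before_passage_filt: "before_passage r u \<in> sets (filt M nu N (r - 1))"
proof -
  have [measurable]: "(\<lambda>\<omega>. \<Sum>s=1..r-1. cN nu N s \<omega>) \<in> borel_measurable (filt M nu N (r - 1))"
    by (rule borel_measurable_partial_sum_cN_filt) simp
  have "{\<omega> \<in> space (filt M nu N (r - 1)). (\<Sum>s=1..r-1. cN nu N s \<omega>) < u} \<in> sets (filt M nu N (r - 1))"
    by measurable
  then show ?thesis unfolding before_passage_def space_filt .
qed

lemma sum_integral_before_passage_le:
  assumes "0 \<le> u"
  shows "(\<Sum>r=1..n. \<integral>\<omega>. indicator (before_passage r u) \<omega> * cN nu N r \<omega> \<partial>M N) \<le> u + 1"
proof -
  have int: "integrable (M N) (\<lambda>\<omega>. indicator (before_passage r u) \<omega> * cN nu N r \<omega>)" if "r \<in> {1..n}" for r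
    using that by (intro integrable_indicator_cN sets_filt_subset[OF before_passage_filt]) auto
  have "(\<Sum>r=1..n. \<integral>\<omega>. indicator (before_passage r u) \<omega> * cN nu N r \<omega> \<partial>M N)
      = (\<integral>\<omega>. (\<Sum>r=1..n. indicator (before_passage r u) \<omega> * cN nu N r \<omega>) \<partial>M N)"
    using int by (rule Bochner_Integration.integral_sum[symmetric])
  also have "\<dots> \<le> (\<integral>\<omega>. u + 1 \<partial>M N)"
  proof (rule integral_mono)
    show "integrable (M N) (\<lambda>\<omega>. \<Sum>r=1..n. indicator (before_passage r u) \<omega> * cN nu N r \<omega>)"
      using int by (rule Bochner_Integration.integrable_sum)
    show "integrable (M N) (\<lambda>\<omega>. u + 1)" by simp
    fix \<omega> assume "\<omega> \<in> space (M N)"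
    then have "(\<Sum>r=1..n. indicator (before_passage r u) \<omega> * cN nu N r \<omega>)
        = (\<Sum>r=1..n. if (\<Sum>s=1..r-1. cN nu N s \<omega>) < u then cN nu N r \<omega> else 0)"
      by (intro sum.cong) (auto simp: before_passage_def)
    also have "\<dots> \<le> u + 1"
      using \<open>\<omega> \<in> space (M N)\<close> \<open>0 \<le> u\<close> by (intro sum_before_passage_le cN_nonneg cN_le_1)
    finally show "(\<Sum>r=1..n. indicator (before_passage r u) \<omega> * cN nu N r \<omega>) \<le> u + 1" .
  qed
  also have "\<dots> = u + 1" by (simp add: prob_space)
  finally show ?thesis .
qed

lemma prob_big_increment_before_passage_le:
  assumes "0 \<le> u" "\<delta> > 0"
  shows "prob {\<omega> \<in> space (M N). \<exists>r\<ge>1. (\<Sum>s=1..r-1. cN nu N s \<omega>) < u \<and> \<delta> < cN nu N r \<omega>}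
    \<le> (\<bar>b\<bar> + 1 / (real N - 1)) * (u + 1) / \<delta>^2"
proof -
  define A where "A r = before_passage r u \<inter> {\<omega>. \<delta> < cN nu N r \<omega>}" for r
  define H where "H n = (\<Union>r\<in>{1..n}. A r)" for n
  have A: "A r \<in> events" for r
  proof -
    have "A r = before_passage r u \<inter> {\<omega> \<in> space (M N). \<delta> < cN nu N r \<omega>}"
      unfolding A_def before_passage_def by auto
    then show ?thesis using sets_filt_subset[OF before_passage_filt, of r u] by simp
  qed
  have "prob (H n) \<le> (\<bar>b\<bar> + 1 / (real N - 1)) * (u + 1) / \<delta>^2" for n
  proof -
    have "prob (H n) \<le> (\<Sum>r=1..n. prob (A r))"
      unfolding H_def using A by (intro measure_UNION_le) auto
    also have "\<dots> \<le> (\<Sum>r=1..n. (\<bar>b\<bar> + 1 / (real N - 1)) / \<delta>^2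
        * (\<integral>\<omega>. indicator (before_passage r u) \<omega> * cN nu N r \<omega> \<partial>M N))"
      unfolding A_def using assms by (intro sum_mono measure_cN_gt_le before_passage_filt) auto
    also have "\<dots> \<le> (\<bar>b\<bar> + 1 / (real N - 1)) / \<delta>^2 * (u + 1)"
      unfolding sum_distrib_left[symmetric] using sum_integral_before_passage_le[OF assms(1)] N3
      by (intro mult_left_mono) auto
    finally show ?thesis by simp
  qed
  moreover have "(\<lambda>n. prob (H n)) \<longlonglongrightarrow> prob (\<Union>n. H n)"
  proof (rule finite_Lim_measure_incseq)
    show "incseq H" unfolding H_def by (rule monoI, rule UN_mono) auto
  qed (use A in \<open>auto simp: H_def\<close>)
  moreover have "(\<Union>n. H n) = {\<omega> \<in> space (M N). \<exists>r\<ge>1. (\<Sum>s=1..r-1. cN nu N s \<omega>) < u \<and> \<delta> < cN nu N r \<omega>}"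
    unfolding H_def A_def before_passage_def by (auto, metis atLeastAtMost_iff order_refl)
  ultimately show ?thesis by (metis LIMSEQ_le_const2)
qed

lemma pred_mem_rtuples [measurable]: "Measurable.pred (M N) (\<lambda>\<omega>. r \<in> rtuples nu N k t \<omega>)"
  unfolding rtuples_eq_passage_tuples mem_passage_tuples_iff[OF cN_nonneg] by measurable

lemma borel_measurable_sum_rtuples:
  "(\<lambda>\<omega>. \<Sum>r\<in>rtuples nu N k t \<omega>. \<Prod>i=1..k. cN nu N (r i) \<omega>) \<in> borel_measurable (M N)"
proof -
  define fin where "fin \<omega> \<longleftrightarrow> (\<exists>n. \<forall>m. \<forall>r\<in>bounded_tuples k m. r \<in> rtuples nu N k t \<omega> \<longrightarrow> r \<in> bounded_tuples k n)" for \<omega>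
  have fin_iff: "fin \<omega> \<longleftrightarrow> finite (rtuples nu N k t \<omega>)" for \<omega>
    unfolding fin_def rtuples_eq_passage_tuples finite_passage_tuples_iff ..
  have [measurable]: "Measurable.pred (M N) fin"
    unfolding fin_def by (intro pred_intros_countable pred_intros_finite[OF finite_bounded_tuples]) measurable
  define S where "S n \<omega> = (if fin \<omega> then \<Sum>r\<in>bounded_tuples k n \<inter> rtuples nu N k t \<omega>. \<Prod>i=1..k. cN nu N (r i) \<omega> else 0)"
    for n \<omega>
  have S_measurable: "S n \<in> borel_measurable (M N)" for n
    unfolding S_def sum.inter_restrict[OF finite_bounded_tuples] by measurable
  have S_lim: "(\<lambda>n. S n \<omega>) \<longlonglongrightarrow> (\<Sum>r\<in>rtuples nu N k t \<omega>. \<Prod>i=1..k. cN nu N (r i) \<omega>)" for \<omega>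
  proof (cases "fin \<omega>")
    case True
    then obtain n0 where "rtuples nu N k t \<omega> \<subseteq> bounded_tuples k n0"
      using fin_iff finite_passage_tuples_iff passage_tuple_in_bounded_tuples unfolding fin_def rtuples_eq_passage_tuples
      by blast
    then have "rtuples nu N k t \<omega> \<subseteq> bounded_tuples k n" if "n \<ge> n0" for n
      using that unfolding bounded_tuples_def by fastforce
    then have "\<forall>\<^sub>F n in sequentially. S n \<omega> = (\<Sum>r\<in>rtuples nu N k t \<omega>. \<Prod>i=1..k. cN nu N (r i) \<omega>)"
      unfolding S_def eventually_sequentially using True by (metis Int_absorb1)
    then show ?thesis by (rule tendsto_eventually)
  next
    case False
    then show ?thesis unfolding S_def using fin_iff by simp
  qed
  show ?thesis by (rule borel_measurable_LIMSEQ_real[OF S_lim S_measurable])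
qed

lemma sum_rtuples_approx:
  assumes \<omega>: "\<omega> \<in> space (M N)" and passed: "tauN nu N (t k) \<omega> \<noteq> \<infinity>"
    and t0: "t 0 = 0" and t_mono: "\<forall>j<k. t j \<le> t (Suc j)" and \<delta>: "0 < \<delta>" "\<delta> \<le> 1"
  defines "H \<equiv> {\<omega> \<in> space (M N). \<exists>r\<ge>1. (\<Sum>s=1..r-1. cN nu N s \<omega>) < t k \<and> \<delta> < cN nu N r \<omega>}"
  shows "\<bar>(\<Sum>r\<in>rtuples nu N k t \<omega>. \<Prod>i=1..k. cN nu N (r i) \<omega>) - tuple_limit k t\<bar>
    \<le> approx_const k (t k) * \<delta> + approx_const k (t k) * indicator H \<omega>"
proof -
  define c where "c r = cN nu N r \<omega>" for r
  have c_nonneg: "0 \<le> c r" for r unfolding c_def by (rule cN_nonneg)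
  have "\<exists>s. t k \<le> (\<Sum>r=1..s. c r)"
    using passed unfolding tauN_eq_passage_time passage_time_def c_def by (auto split: if_splits)
  note approx = passage_tuples_sum_approx[OF c_nonneg t0 t_mono this]
  have K_nonneg: "0 \<le> approx_const k (t k)"
    using mono_upto_le[OF t_mono, of 0 k] t0 unfolding approx_const_def by simp
  have "\<bar>(\<Sum>r\<in>passage_tuples c k t. \<Prod>i=1..k. c (r i)) - tuple_limit k t\<bar>
      \<le> approx_const k (t k) * \<delta> + approx_const k (t k) * indicator H \<omega>"
  proof (cases "\<omega> \<in> H")
    case True
    have "\<forall>r\<ge>1. (\<Sum>s=1..r-1. c s) < t k \<longrightarrow> c r \<le> 1" using cN_le_1 \<omega> unfolding c_def by blast
    then have "\<bar>(\<Sum>r\<in>passage_tuples c k t. \<Prod>i=1..k. c (r i)) - tuple_limit k t\<bar> \<le> approx_const k (t k)"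
      using approx[of 1] by simp
    moreover have "0 \<le> approx_const k (t k) * \<delta>" using K_nonneg \<delta> by simp
    ultimately show ?thesis using True by simp
  next
    case False
    then have "\<forall>r\<ge>1. (\<Sum>s=1..r-1. c s) < t k \<longrightarrow> c r \<le> \<delta>" using \<omega> unfolding H_def c_def by (auto simp: not_less)
    then show ?thesis using approx[of \<delta>] False \<delta> by simp
  qed
  then show ?thesis unfolding rtuples_eq_passage_tuples c_def .
qed

lemma integral_indicator_sum_rtuples_approx:
  assumes E: "E \<in> events" and passed: "AE \<omega> in M N. tauN nu N (t k) \<omega> \<noteq> \<infinity>"
    and t0: "t 0 = 0" and t_mono: "\<forall>j<k. t j \<le> t (Suc j)" and \<delta>: "0 < \<delta>" "\<delta> \<le> 1"
  shows "\<bar>(\<integral>\<omega>. indicator E \<omega> * (\<Sum>r\<in>rtuples nu N k t \<omega>. \<Prod>i=1..k. cN nu N (r i) \<omega>) \<partial>M N)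
      - tuple_limit k t\<bar>
    \<le> approx_const k (t k) * \<delta> + (approx_const k (t k) * ((\<bar>b\<bar> + 1 / (real N - 1)) * (t k + 1))
      + \<bar>tuple_limit k t\<bar> * \<bar>1 - prob E\<bar>) / \<delta>^2"
proof -
  define H where "H = {\<omega> \<in> space (M N). \<exists>r\<ge>1. (\<Sum>s=1..r-1. cN nu N s \<omega>) < t k \<and> \<delta> < cN nu N r \<omega>}"
  have t_nonneg: "0 \<le> t k" using mono_upto_le[OF t_mono, of 0 k] t0 by simp
  note K_nonneg = approx_const_nonneg[OF t_nonneg, of k]
  have "H \<in> events" unfolding H_def by measurable
  moreover have "AE \<omega> in M N. \<bar>(\<Sum>r\<in>rtuples nu N k t \<omega>. \<Prod>i=1..k. cN nu N (r i) \<omega>) - tuple_limit k t\<bar>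
      \<le> approx_const k (t k) * \<delta> + approx_const k (t k) * indicator H \<omega>"
    using passed by (rule AE_mp[OF _ AE_I2]) (use sum_rtuples_approx[OF _ _ t0 t_mono \<delta>] H_def in auto)
  ultimately have "\<bar>(\<integral>\<omega>. indicator E \<omega> * (\<Sum>r\<in>rtuples nu N k t \<omega>. \<Prod>i=1..k. cN nu N (r i) \<omega>) \<partial>M N)
      - tuple_limit k t\<bar> \<le> approx_const k (t k) * \<delta> + approx_const k (t k) * prob H + \<bar>tuple_limit k t\<bar> * \<bar>1 - prob E\<bar>"
    using K_nonneg \<delta> by (intro abs_integral_indicator_diff_le borel_measurable_sum_rtuples E) auto
  moreover have "approx_const k (t k) * prob H
      \<le> approx_const k (t k) * ((\<bar>b\<bar> + 1 / (real N - 1)) * (t k + 1)) / \<delta>^2"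
    using mult_left_mono[OF prob_big_increment_before_passage_le[OF t_nonneg \<delta>(1)] K_nonneg]
    unfolding H_def by simp
  moreover have "\<bar>tuple_limit k t\<bar> * \<bar>1 - prob E\<bar> \<le> \<bar>tuple_limit k t\<bar> * \<bar>1 - prob E\<bar> / \<delta>^2"
    using \<delta> by (simp add: le_divide_eq mult_left_le power_le_one)
  ultimately show ?thesis by (simp add: add_divide_distrib)
qed

end

theorem lemma10:
  fixes M :: "nat \<Rightarrow> 'a measure"
    and nu :: "nat \<Rightarrow> nat \<Rightarrow> nat \<Rightarrow> 'a \<Rightarrow> nat"
    and b :: "nat \<Rightarrow> real"
    and E :: "nat \<Rightarrow> 'a set"
    and k :: nat
    and t :: "nat \<Rightarrow> real"
    and T :: real
  assumes prob: "\<And>N. N \<ge> 2 \<Longrightarrow> prob_space (M N)"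
    and meas: "\<And>N s i. N \<ge> 2 \<Longrightarrow> nu N s i \<in> measurable (M N) (count_space UNIV)"
    and total: "\<And>N s \<omega>. N \<ge> 2 \<Longrightarrow> s \<ge> 1 \<Longrightarrow> \<omega> \<in> space (M N) \<Longrightarrow> (\<Sum>i=1..N. nu N s i \<omega>) = N"
    and tau_fin: "\<forall>\<^sub>F N in sequentially. \<forall>u\<ge>0. AE \<omega> in M N. tauN nu N u \<omega> \<noteq> \<infinity>"
    and b_lim: "b \<longlonglongrightarrow> 0"
    and moment: "\<forall>\<^sub>F N in sequentially. \<forall>s\<ge>1. AE \<omega> in M N.
        (\<Sum>i=1..N. real_cond_exp (M N) (filt M nu N (s - 1)) (\<lambda>x. ffact_r (real (nu N s i x)) 3) \<omega>)
          / ffact_r (real N) 3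
        \<le> b N * ((\<Sum>i=1..N. real_cond_exp (M N) (filt M nu N (s - 1)) (\<lambda>x. ffact_r (real (nu N s i x)) 2) \<omega>)
          / ffact_r (real N) 2)"
    and E_sets: "\<And>N. N \<ge> 2 \<Longrightarrow> E N \<in> sets (M N)"
    and E_lim: "(\<lambda>N. measure (M N) (E N)) \<longlonglongrightarrow> 1"
    and t0: "t 0 = 0"
    and t_mono: "\<And>j. j < k \<Longrightarrow> t j \<le> t (Suc j)"
    and tT: "t k \<le> T"
  shows "(\<lambda>N. \<integral>\<omega>. indicator (E N) \<omega> *
            (\<Sum>r\<in>rtuples nu N k t \<omega>. \<Prod>i=1..k. cN nu N (r i) \<omega>) \<partial>M N)
         \<longlonglongrightarrow> (\<Sum>f\<in>ituples k. \<Prod>j=1..k.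
               (t j - t (j - 1)) ^ (ext_idx k f j - ext_idx k f (j - 1))
               / fact (ext_idx k f j - ext_idx k f (j - 1)))"
proof -
  have t_mono': "\<forall>j<k. t j \<le> t (Suc j)" using t_mono by blast
  have t_nonneg: "0 \<le> t k" using mono_upto_le[OF t_mono', of 0 k] t0 by simp
  define g where "g N = approx_const k (t k) * ((\<bar>b N\<bar> + 1 / (real N - 1)) * (t k + 1))
    + \<bar>tuple_limit k t\<bar> * \<bar>1 - measure (M N) (E N)\<bar>" for N
  have "g \<longlonglongrightarrow> approx_const k (t k) * ((0 + 0) * (t k + 1)) + \<bar>tuple_limit k t\<bar> * \<bar>1 - 1\<bar>"
    unfolding g_def by (intro tendsto_intros b_lim E_lim tendsto_rabs_zero LIMSEQ_one_over_real_minus_one)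
  then have "g \<longlonglongrightarrow> 0" by simp
  moreover have "\<forall>\<^sub>F N in sequentially. \<bar>(\<integral>\<omega>. indicator (E N) \<omega> *
      (\<Sum>r\<in>rtuples nu N k t \<omega>. \<Prod>i=1..k. cN nu N (r i) \<omega>) \<partial>M N) - tuple_limit k t\<bar>
      \<le> approx_const k (t k) * \<delta> + g N / \<delta>^2" if \<delta>: "0 < \<delta>" "\<delta> \<le> 1" for \<delta>
    using tau_fin moment eventually_ge_at_top[of 3]
  proof eventually_elim
    case (elim N)
    then have N: "N \<ge> 2" by simp
    interpret moment_bounded_model M nu N "b N"
      by (intro moment_bounded_model.intro prob[OF N] meas[OF N] total[OF N]) (use elim in auto)
    have "AE \<omega> in M N. tauN nu N (t k) \<omega> \<noteq> \<infinity>" using elim t_nonneg by blast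
    then show ?case unfolding g_def by (rule integral_indicator_sum_rtuples_approx[OF E_sets[OF N] _ t0 t_mono' \<delta>])
  qed
  ultimately have "(\<lambda>N. \<integral>\<omega>. indicator (E N) \<omega> *
      (\<Sum>r\<in>rtuples nu N k t \<omega>. \<Prod>i=1..k. cN nu N (r i) \<omega>) \<partial>M N) \<longlonglongrightarrow> tuple_limit k t"
    by (rule tendsto_of_approx_bounds[OF approx_const_nonneg[OF t_nonneg]])
  then show ?thesis unfolding tuple_limit_def ext_idx_gap_def .
qed

end
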